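(* Let $W=W(\Phi)$ be any finite Weyl group, let $u\in W$ be separable, and let $U=[e,u]_R=\{v\in W: v\leq_R u\}$. Then $(W/U,U)$ is a splitting of $W$; that is, the multiplication map $W/U\times U\to W$, $(x,y)\mapsto xy$, is a bijection and satisfies $\ell(xy)=\ell(x)+\ell(y)$ for all $x\in W/U$, $y\in U$.
   Context: $\Phi$ is a finite crystallographic root system with simple roots $\Delta$ and positive roots $\Phi^+$; $W=W(\Phi)$ is its Weyl group, generated by the simple reflections $s_\alpha$, $\alpha\in\Delta$. The length $\ell(w)$ is the minimal number of simple reflections in an expression for $w$. The inversion set is $I_\Phi(w)=\{\beta\in\Phi^+: w\beta\in-\Phi^+\}$, and $\ell(w)=|I_\Phi(w)|$. Left weak order: $v\leq_L w$ iff $I_\Phi(v)\subseteq I_\Phi(w)$ (equivalently $w=zv$ with $\ell(w)=\ell(z)+\ell(v)$); right weak order: $v\leq_R w$ iff $v^{-1}\leq_L w^{-1}$. The root poset on $\Phi^+$: $\beta\leq\beta'$ iff $\beta'-\beta$ is a nonnegative integer combination of simple roots. For $J\subseteq\Delta$, $\Phi_J$ is the set of roots in the span of $J$; more generally for a subsystem $\Phi'=\Phi\cap V$ ($V$ a linear subspace), $w|_{\Phi'}$ denotes the element $w'\in W(\Phi')$ with $I_{\Phi'}(w')=I_\Phi(w)\cap V$. An element $w\in W(\Phi)$ is separable if (S1) $\Phi$ is of type $A_1$; or (S2) $\Phi=\bigoplus_i\Phi_i$ is reducible and each $w|_{\Phi_i}$ is separable; or (S3) $\Phi$ is irreducible and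 there is $\alpha_i\in\Delta$ (a pivot) such that $w|_{\Phi_J}$ is separable for $J=\Delta\setminus\{\alpha_i\}$, and either $\{\beta\in\Phi^+:\beta\geq\alpha_i\}\subseteq I_\Phi(w)$ or $\{\beta\in\Phi^+:\beta\geq\alpha_i\}\cap I_\Phi(w)=\emptyset$. For $U\subseteq W$, the generalized quotient is $W/U=\{w\in W: \ell(wu)=\ell(w)+\ell(u)\ \forall u\in U\}$. A pair $(X,Y)$ of subsets of $W$ is a splitting of $W$ if the map $X\times Y\to W$, $(x,y)\mapsto xy$, is a bijection with $\ell(xy)=\ell(x)+\ell(y)$ for all $x\in X,y\in Y$. *)

theory Defs
  imports "HOL-Analysis.Analysis"
begin

definition refl :: "'a::euclidean_space \<Rightarrow> 'a \<Rightarrow> 'a" where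
  "refl \<alpha> x = x - (2 * (x \<bullet> \<alpha>) / (\<alpha> \<bullet> \<alpha>)) *\<^sub>R \<alpha>"

text \<open>Finite, reduced, crystallographic root system (not required to span the space).\<close>
definition root_system :: "'a::euclidean_space set \<Rightarrow> bool" where
  "root_system \<Phi> \<longleftrightarrow> finite \<Phi> \<and> 0 \<notin> \<Phi>
     \<and> (\<forall>\<alpha>\<in>\<Phi>. \<forall>\<beta>\<in>\<Phi>. refl \<alpha> \<beta> \<in> \<Phi>)
     \<and> (\<forall>\<alpha>\<in>\<Phi>. \<forall>\<beta>\<in>\<Phi>. 2 * (\<beta> \<bullet> \<alpha>) / (\<alpha> \<bullet> \<alpha>) \<in> \<int>)
     \<and> (\<forall>\<alpha>\<in>\<Phi>. \<forall>c::real. c *\<^sub>R \<alpha> \<in> \<Phi> \<longrightarrow> c = 1 \<or> c = -1)"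

definition nonneg_comb :: "'a::euclidean_space set \<Rightarrow> 'a \<Rightarrow> bool" where
  "nonneg_comb \<Delta> \<beta> \<longleftrightarrow> (\<exists>c::'a \<Rightarrow> nat. \<beta> = (\<Sum>\<alpha>\<in>\<Delta>. real (c \<alpha>) *\<^sub>R \<alpha>))"

definition simple_system :: "'a::euclidean_space set \<Rightarrow> 'a set \<Rightarrow> bool" where
  "simple_system \<Phi> \<Delta> \<longleftrightarrow> \<Delta> \<subseteq> \<Phi> \<and> independent \<Delta>
     \<and> (\<forall>\<beta>\<in>\<Phi>. nonneg_comb \<Delta> \<beta> \<or> nonneg_comb \<Delta> (- \<beta>))"

definition pos_roots :: "'a::euclidean_space set \<Rightarrow> 'a set \<Rightarrow> 'a set" where
  "pos_roots \<Phi> \<Delta> = {\<beta>\<in>\<Phi>. nonneg_comb \<Delta> \<beta>}"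

definition root_le :: "'a::euclidean_space set \<Rightarrow> 'a \<Rightarrow> 'a \<Rightarrow> bool" where
  "root_le \<Delta> \<alpha> \<beta> \<longleftrightarrow> nonneg_comb \<Delta> (\<beta> - \<alpha>)"

inductive_set weyl :: "'a::euclidean_space set \<Rightarrow> ('a \<Rightarrow> 'a) set" for \<Delta> where
  weyl_id: "id \<in> weyl \<Delta>"
| weyl_step: "\<alpha> \<in> \<Delta> \<Longrightarrow> w \<in> weyl \<Delta> \<Longrightarrow> refl \<alpha> \<circ> w \<in> weyl \<Delta>"

definition word_prod :: "'a::euclidean_space list \<Rightarrow> 'a \<Rightarrow> 'a" where
  "word_prod as = foldr (\<lambda>\<alpha> f. refl \<alpha> \<circ> f) as id"

definition len :: "'a::euclidean_space set \<Rightarrow> ('a \<Rightarrow> 'a) \<Rightarrow> nat" where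
  "len \<Delta> w = (LEAST n. \<exists>as. length as = n \<and> set as \<subseteq> \<Delta> \<and> w = word_prod as)"

definition inv_set :: "'a::euclidean_space set \<Rightarrow> 'a set \<Rightarrow> ('a \<Rightarrow> 'a) \<Rightarrow> 'a set" where
  "inv_set \<Phi> \<Delta> w = {\<beta>\<in>pos_roots \<Phi> \<Delta>. - (w \<beta>) \<in> pos_roots \<Phi> \<Delta>}"

definition left_le :: "'a::euclidean_space set \<Rightarrow> 'a set \<Rightarrow> ('a \<Rightarrow> 'a) \<Rightarrow> ('a \<Rightarrow> 'a) \<Rightarrow> bool" where
  "left_le \<Phi> \<Delta> v w \<longleftrightarrow> inv_set \<Phi> \<Delta> v \<subseteq> inv_set \<Phi> \<Delta> w"

definition right_le :: "'a::euclidean_space set \<Rightarrow> 'a set \<Rightarrow> ('a \<Rightarrow> 'a) \<Rightarrow> ('a \<Rightarrow> 'a) \<Rightarrow> bool" where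
  "right_le \<Phi> \<Delta> v w \<longleftrightarrow> left_le \<Phi> \<Delta> (inv v) (inv w)"

definition irreducible_rs :: "'a::euclidean_space set \<Rightarrow> bool" where
  "irreducible_rs \<Phi> \<longleftrightarrow> \<Phi> \<noteq> {} \<and>
     \<not> (\<exists>A B. A \<noteq> {} \<and> B \<noteq> {} \<and> A \<union> B = \<Phi> \<and> (\<forall>a\<in>A. \<forall>b\<in>B. a \<bullet> b = 0))"

definition reducible_rs :: "'a::euclidean_space set \<Rightarrow> bool" where
  "reducible_rs \<Phi> \<longleftrightarrow> \<Phi> \<noteq> {} \<and> \<not> irreducible_rs \<Phi>"

definition component :: "'a::euclidean_space set \<Rightarrow> 'a set \<Rightarrow> bool" where
  "component \<Phi> C \<longleftrightarrow> C \<subseteq> \<Phi> \<and> irreducible_rs C \<and> (\<forall>a\<in>C. \<forall>b\<in>\<Phi> - C. a \<bullet> b = 0)"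

text \<open>Separability of \<open>w\<close> depends only on \<open>(\<Phi>, \<Delta>, I(w))\<close>; \<open>sep \<Phi> \<Delta> N\<close> says that the
  element with inversion set \<open>N\<close> is separable. Restriction \<open>w|\<^sub>\<Phi>'\<close> to \<open>\<Phi>' = \<Phi> \<inter> V\<close>
  is the element whose inversion set is \<open>I(w) \<inter> V\<close> (w.r.t. the positive system \<open>\<Phi>\<^sup>+ \<inter> V\<close>).\<close>
inductive sep :: "'a::euclidean_space set \<Rightarrow> 'a set \<Rightarrow> 'a set \<Rightarrow> bool" where
  S1: "\<alpha> \<noteq> 0 \<Longrightarrow> \<Phi> = {\<alpha>, - \<alpha>} \<Longrightarrow> sep \<Phi> \<Delta> N"
| S2: "reducible_rs \<Phi> \<Longrightarrow>
       (\<And>C. component \<Phi> C \<Longrightarrow>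
          (\<exists>\<Delta>'. simple_system (\<Phi> \<inter> span C) \<Delta>'
               \<and> pos_roots (\<Phi> \<inter> span C) \<Delta>' = pos_roots \<Phi> \<Delta> \<inter> span C
               \<and> sep (\<Phi> \<inter> span C) \<Delta>' (N \<inter> span C))) \<Longrightarrow>
       sep \<Phi> \<Delta> N"
| S3: "irreducible_rs \<Phi> \<Longrightarrow> \<alpha> \<in> \<Delta> \<Longrightarrow>
       sep (\<Phi> \<inter> span (\<Delta> - {\<alpha>})) (\<Delta> - {\<alpha>}) (N \<inter> span (\<Delta> - {\<alpha>})) \<Longrightarrow>
       ({\<beta>\<in>pos_roots \<Phi> \<Delta>. root_le \<Delta> \<alpha> \<beta>} \<subseteq> N
        \<or> {\<beta>\<in>pos_roots \<Phi> \<Delta>. root_le \<Delta> \<alpha> \<beta>} \<inter> N = {}) \<Longrightarrow>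
       sep \<Phi> \<Delta> N"

definition separable :: "'a::euclidean_space set \<Rightarrow> 'a set \<Rightarrow> ('a \<Rightarrow> 'a) \<Rightarrow> bool" where
  "separable \<Phi> \<Delta> w \<longleftrightarrow> sep \<Phi> \<Delta> (inv_set \<Phi> \<Delta> w)"

definition gen_quot :: "'a::euclidean_space set \<Rightarrow> ('a \<Rightarrow> 'a) set \<Rightarrow> ('a \<Rightarrow> 'a) set" where
  "gen_quot \<Delta> U = {w\<in>weyl \<Delta>. \<forall>u\<in>U. len \<Delta> (w \<circ> u) = len \<Delta> w + len \<Delta> u}"

definition splitting :: "'a::euclidean_space set \<Rightarrow> ('a \<Rightarrow> 'a) set \<Rightarrow> ('a \<Rightarrow> 'a) set \<Rightarrow> bool" where
  "splitting \<Delta> X Y \<longleftrightarrow> bij_betw (\<lambda>(x, y). x \<circ> y) (X \<times> Y) (weyl \<Delta>)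
     \<and> (\<forall>x\<in>X. \<forall>y\<in>Y. len \<Delta> (x \<circ> y) = len \<Delta> x + len \<Delta> y)"

end

theory Submission
  imports Defs
begin

text \<open>
  Write \<open>N w = I (w\<inverse>)\<close>. Lengths add, \<open>len (x y) = len x + len y\<close>, exactly when
  \<open>I x \<inter> N y = {}\<close>. Hence \<open>[e, u]\<^sub>R = {y. N y \<subseteq> N u}\<close> and
  \<open>W / [e, u]\<^sub>R = {x. I x \<inter> N u = {}}\<close>, and the theorem says that multiplication from the
  product of these two sets to \<open>W\<close> is bijective; we then say that \<open>u\<close> splits.

  This is proved by induction along the definition of separability. Splitting lifts from a
  parabolic subgroup \<open>W\<^sub>J\<close> containing \<open>u\<close> to \<open>W\<close>, by factoring \<open>w = a c\<close> with \<open>a\<close> minimal in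
  \<open>w W\<^sub>J\<close>; it passes from \<open>u\<close> to \<open>w\<^sub>0 u\<close> because the anti-automorphism
  \<open>z \<mapsto> w\<^sub>0 z\<inverse> w\<^sub>0\<close> maps \<open>[e, u]\<^sub>R\<close> onto \<open>W / [e, w\<^sub>0 u]\<^sub>R\<close> and \<open>W / [e, u]\<^sub>R\<close> onto
  \<open>[e, w\<^sub>0 u]\<^sub>R\<close>; and it is multiplicative over an orthogonal decomposition, where \<open>W\<close> is
  the commuting product of the two factors. For a pivot \<open>\<alpha>\<close>, the roots above \<open>\<alpha>\<close> are
  the positive roots outside \<open>span (\<Delta> - {\<alpha>})\<close>, so \<open>u\<close> or \<open>w\<^sub>0 u\<close> lies in the maximal
  parabolic subgroup \<open>W\<^bsub>\<Delta> - {\<alpha>}\<^esub>\<close>, where the induction hypothesis applies.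
\<close>

lemma refl_add: "refl a (x + y) = refl a x + refl a y"
  by (simp add: refl_def inner_add_left add_divide_distrib scaleR_add_left algebra_simps)

lemma refl_scale: "refl a (c *\<^sub>R x) = c *\<^sub>R refl a x"
  by (simp add: refl_def algebra_simps)

lemma linear_refl: "linear (refl a)"
  by (rule linearI) (simp_all add: refl_add refl_scale)

lemma refl_self: "a \<noteq> 0 \<Longrightarrow> refl a a = - a"
  by (simp add: refl_def algebra_simps) (simp add: scaleR_2)

lemma refl_inner_self: "a \<noteq> 0 \<Longrightarrow> refl a x \<bullet> a = - (x \<bullet> a)"
  by (simp add: refl_def inner_diff_left)

lemma refl_refl [simp]: "a \<noteq> 0 \<Longrightarrow> refl a (refl a x) = x"
  by (subst refl_def[of a "refl a x"]) (simp add: refl_inner_self, simp add: refl_def)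

lemma refl_comp_refl: "a \<noteq> 0 \<Longrightarrow> refl a \<circ> refl a = id"
  by auto

lemma inj_refl: "a \<noteq> 0 \<Longrightarrow> inj (refl a)"
  by (metis injI refl_refl)

lemma refl_inner_refl: "a \<noteq> 0 \<Longrightarrow> refl a x \<bullet> refl a y = x \<bullet> y"
  by (simp add: refl_def inner_diff_left inner_diff_right inner_commute[of a y])

lemma refl_conj:
  assumes "linear f" "\<And>x y. f x \<bullet> f y = x \<bullet> y"
  shows "f (refl a x) = refl (f a) (f x)"
  using assms by (simp add: refl_def linear_diff linear_scale)

lemma refl_commute: "a \<bullet> b = 0 \<Longrightarrow> refl a (refl b x) = refl b (refl a x)"
  by (simp add: refl_def inner_diff_left inner_commute[of b a] algebra_simps)

lemma refl_in_span: "\<alpha> \<in> J \<Longrightarrow> x \<in> span J \<Longrightarrow> refl \<alpha> x \<in> span J"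
  unfolding refl_def by (rule span_diff, assumption, rule span_scale, rule span_base)

lemma word_prod_Nil [simp]: "word_prod [] = id"
  by (simp add: word_prod_def)

lemma word_prod_Cons [simp]: "word_prod (a # as) = refl a \<circ> word_prod as"
  by (simp add: word_prod_def)

lemma word_prod_append: "word_prod (xs @ ys) = word_prod xs \<circ> word_prod ys"
  by (induction xs) (auto simp: o_assoc)

lemma word_prod_snoc: "word_prod (xs @ [a]) = word_prod xs \<circ> refl a"
  by (simp add: word_prod_append)

lemma word_prod_rev_comp: "0 \<notin> set as \<Longrightarrow> word_prod (rev as) \<circ> word_prod as = id"
proof (induction as)
  case (Cons a as)
  then have "word_prod (rev (a # as)) \<circ> word_prod (a # as)
      = word_prod (rev as) \<circ> (refl a \<circ> refl a) \<circ> word_prod as"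
    by (simp add: word_prod_append o_assoc)
  also have "\<dots> = id"
    using Cons by (simp add: refl_comp_refl fun_eq_iff)
  finally show ?case .
qed simp

lemma linear_word_prod: "linear (word_prod as)"
proof (induction as)
  case Nil
  then show ?case by (simp add: linear_ident)
next
  case (Cons a as)
  then show ?case
    using linear_compose[OF Cons.IH linear_refl[of a]] by (simp add: o_def)
qed

lemma word_prod_inner: "0 \<notin> set as \<Longrightarrow> word_prod as x \<bullet> word_prod as y = x \<bullet> y"
  by (induction as arbitrary: x y) (auto simp: refl_inner_refl)

lemma weyl_iff_word: "w \<in> weyl D \<longleftrightarrow> (\<exists>as. set as \<subseteq> D \<and> w = word_prod as)"
proof
  assume "w \<in> weyl D"
  then show "\<exists>as. set as \<subseteq> D \<and> w = word_prod as"
  proof induction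
    case weyl_id
    show ?case by (intro exI[of _ "[]"]) auto
  next
    case (weyl_step a w)
    then obtain as where "set as \<subseteq> D" "w = word_prod as" by auto
    with weyl_step show ?case by (intro exI[of _ "a # as"]) auto
  qed
next
  assume "\<exists>as. set as \<subseteq> D \<and> w = word_prod as"
  then obtain as where "set as \<subseteq> D" "w = word_prod as" by auto
  then show "w \<in> weyl D"
    by (induction as arbitrary: w) (auto intro: weyl.intros)
qed

lemma word_prod_in_weyl: "set as \<subseteq> D \<Longrightarrow> word_prod as \<in> weyl D"
  using weyl_iff_word by blast

lemma weyl_comp: "v \<in> weyl D \<Longrightarrow> w \<in> weyl D \<Longrightarrow> v \<circ> w \<in> weyl D"
  unfolding weyl_iff_word by (metis set_append sup.boundedI word_prod_append)

lemma weyl_refl: "a \<in> D \<Longrightarrow> refl a \<in> weyl D"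
  using weyl_step[OF _ weyl_id, of a D] by simp

lemma weyl_mono: "D \<subseteq> D' \<Longrightarrow> weyl D \<subseteq> weyl D'"
  by (auto simp: weyl_iff_word) blast

lemma weyl_empty: "weyl {} = {id}"
proof (intro equalityI subsetI)
  fix w assume "w \<in> weyl {}"
  then show "w \<in> {id}" by (induction rule: weyl.induct) auto
qed (auto intro: weyl_id)

lemma weyl_preserves_span: "w \<in> weyl J \<Longrightarrow> x \<in> span J \<Longrightarrow> w x \<in> span J"
  by (induction arbitrary: x rule: weyl.induct) (simp_all add: refl_in_span)

lemma weyl_moves_within_span: "w \<in> weyl J \<Longrightarrow> w x - x \<in> span J"
proof (induction rule: weyl.induct)
  case (weyl_step \<alpha> w)
  have "(refl \<alpha> \<circ> w) x - x = (w x - x) - (2 * (w x \<bullet> \<alpha>) / (\<alpha> \<bullet> \<alpha>)) *\<^sub>R \<alpha>"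
    by (simp add: refl_def algebra_simps)
  also have "\<dots> \<in> span J"
    using weyl_step by (intro span_diff[OF _ span_scale[OF span_base]]) auto
  finally show ?case .
qed (simp add: span_zero)

context
  fixes D :: "'a::euclidean_space set"
  assumes zero_notin: "0 \<notin> D"
begin

lemma weyl_linear: "w \<in> weyl D \<Longrightarrow> linear w"
  by (auto simp: weyl_iff_word linear_word_prod)

lemma weyl_inner: "w \<in> weyl D \<Longrightarrow> w x \<bullet> w y = x \<bullet> y"
proof -
  assume "w \<in> weyl D"
  then obtain as where "set as \<subseteq> D" "w = word_prod as" by (auto simp: weyl_iff_word)
  moreover from this have "0 \<notin> set as" using zero_notin by auto
  ultimately show ?thesis by (simp add: word_prod_inner)
qed

lemma weyl_inv: "w \<in> weyl D \<Longrightarrow> inv w \<in> weyl D \<and> w \<circ> inv w = id \<and> inv w \<circ> w = id"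
proof -
  assume "w \<in> weyl D"
  then obtain as where as: "set as \<subseteq> D" "w = word_prod as" by (auto simp: weyl_iff_word)
  then have "0 \<notin> set as" using zero_notin by auto
  then have rev_inverse: "word_prod (rev as) \<circ> w = id" "w \<circ> word_prod (rev as) = id"
    using as word_prod_rev_comp[of as] word_prod_rev_comp[of "rev as"] by auto
  then have "inv w = word_prod (rev as)"
    by (auto intro: inv_unique_comp)
  then show ?thesis using rev_inverse as word_prod_in_weyl[of "rev as" D] by auto
qed

lemma weyl_bij: "w \<in> weyl D \<Longrightarrow> bij w"
  using weyl_inv by (metis o_bij)

lemma weyl_inv_apply: "w \<in> weyl D \<Longrightarrow> inv w (w x) = x" "w \<in> weyl D \<Longrightarrow> w (inv w x) = x"
  using weyl_inv by (metis comp_apply id_apply)+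

lemma weyl_inj: "w \<in> weyl D \<Longrightarrow> w x = w y \<longleftrightarrow> x = y"
  by (metis weyl_inv_apply(1))

lemma weyl_neg: "w \<in> weyl D \<Longrightarrow> w (- x) = - w x"
  using weyl_linear linear_neg by blast

lemma weyl_inv_comp: "v \<in> weyl D \<Longrightarrow> w \<in> weyl D \<Longrightarrow> inv (v \<circ> w) = inv w \<circ> inv v"
  by (meson o_inv_distrib weyl_bij)

lemma weyl_inv_inv: "w \<in> weyl D \<Longrightarrow> inv (inv w) = w"
  by (meson inv_inv_eq weyl_bij)

lemma weyl_conj_refl: "w \<in> weyl D \<Longrightarrow> w \<circ> refl a = refl (w a) \<circ> w"
  by (rule ext) (simp add: refl_conj weyl_linear weyl_inner)

end

lemma weyl_commute_refl:
  assumes "w \<in> weyl J" "\<And>a. a \<in> J \<Longrightarrow> a \<bullet> b = 0"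
  shows "w \<circ> refl b = refl b \<circ> w"
  using assms
proof (induction rule: weyl.induct)
  case (weyl_step a w)
  then have "a \<bullet> b = 0" by blast
  then have "refl a \<circ> refl b = refl b \<circ> refl a"
    by (intro ext) (metis comp_apply refl_commute)
  with weyl_step show ?case by (metis comp_assoc)
qed simp

lemma weyl_commute:
  assumes c1: "c1 \<in> weyl J1" and c2: "c2 \<in> weyl J2"
    and orth: "\<And>a b. a \<in> J1 \<Longrightarrow> b \<in> J2 \<Longrightarrow> a \<bullet> b = 0"
  shows "c1 \<circ> c2 = c2 \<circ> c1"
  using c2
proof (induction rule: weyl.induct)
  case (weyl_step b w)
  then have "c1 \<circ> refl b = refl b \<circ> c1"
    using weyl_commute_refl[OF c1] orth by blast
  with weyl_step show ?case by (metis comp_assoc)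
qed simp

lemma representation_sum_eq:
  fixes D :: "'a::euclidean_space set"
  assumes "finite D" "independent D" "d \<in> D"
  shows "representation D (\<Sum>d\<in>D. f d *\<^sub>R d) d = f d"
proof -
  have "representation D (\<Sum>d\<in>D. f d *\<^sub>R d) = (\<lambda>b. if b \<in> D then f b else 0)"
  proof (rule representation_eqI[OF assms(2)])
    show "finite {b. (if b \<in> D then f b else 0) \<noteq> 0}"
      by (rule finite_subset[OF _ assms(1)]) auto
    show "(\<Sum>b | (if b \<in> D then f b else 0) \<noteq> 0. (if b \<in> D then f b else 0) *\<^sub>R b) = (\<Sum>d\<in>D. f d *\<^sub>R d)"
      by (rule sum.mono_neutral_cong_left[OF assms(1)]) auto
  qed (auto split: if_splits intro: span_sum span_scale span_base)
  then show ?thesis using assms(3) by simp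
qed

lemma orthogonal_spans:
  fixes A B :: "'a::euclidean_space set"
  assumes "\<And>a b. a \<in> A \<Longrightarrow> b \<in> B \<Longrightarrow> a \<bullet> b = 0" "x \<in> span A" "y \<in> span B"
  shows "x \<bullet> y = 0"
  by (metis assms orthogonal_commute orthogonal_def orthogonal_to_span)

lemma bij_betw_mult_iff:
  "bij_betw (\<lambda>(x, y). x \<circ> y) (A \<times> B) C \<longleftrightarrow>
     (\<forall>x\<in>A. \<forall>y\<in>B. x \<circ> y \<in> C) \<and> (\<forall>w\<in>C. \<exists>x\<in>A. \<exists>y\<in>B. w = x \<circ> y) \<and>
     (\<forall>x1\<in>A. \<forall>y1\<in>B. \<forall>x2\<in>A. \<forall>y2\<in>B. x1 \<circ> y1 = x2 \<circ> y2 \<longrightarrow> x1 = x2 \<and> y1 = y2)"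
  unfolding bij_betw_def inj_on_def by (auto simp: image_iff)

lemma bij_betw_mult_antiauto:
  assumes bij: "bij_betw (\<lambda>(x, y). x \<circ> y) (A \<times> B) W"
    and AB: "A \<subseteq> W" "B \<subseteq> W" and A': "\<psi> ` B = A'" and B': "\<psi> ` A = B'"
    and \<psi>W: "\<psi> ` W \<subseteq> W" and invol: "\<And>w. w \<in> W \<Longrightarrow> \<psi> (\<psi> w) = w"
    and anti: "\<And>x y. x \<in> W \<Longrightarrow> y \<in> W \<Longrightarrow> \<psi> (x \<circ> y) = \<psi> y \<circ> \<psi> x"
  shows "bij_betw (\<lambda>(x, y). x \<circ> y) (A' \<times> B') W"
proof -
  have \<psi>: "bij_betw \<psi> W W"
    by (rule bij_betw_byWitness[of _ \<psi>]) (use invol \<psi>W in auto)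
  have swap: "bij_betw (\<lambda>(x, y). (\<psi> y, \<psi> x)) (A' \<times> B') (A \<times> B)"
    unfolding A'[symmetric] B'[symmetric]
    by (rule bij_betw_byWitness[of _ "\<lambda>(x, y). (\<psi> y, \<psi> x)"]) (use AB invol in auto)
  have "A' \<subseteq> W" "B' \<subseteq> W"
    using A' B' AB \<psi>W by auto
  then have "\<psi> (\<psi> y \<circ> \<psi> x) = x \<circ> y" if "x \<in> A'" "y \<in> B'" for x y
    using that \<psi>W by (subst anti) (auto simp: invol subsetD)
  then have "(\<psi> \<circ> ((\<lambda>(x, y). x \<circ> y) \<circ> (\<lambda>(x, y). (\<psi> y, \<psi> x)))) p = (\<lambda>(x, y). x \<circ> y) p"
    if "p \<in> A' \<times> B'" for p
    using that by auto
  with bij_betw_trans[OF bij_betw_trans[OF swap bij] \<psi>] show ?thesis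
    using bij_betw_cong by blast
qed

locale based_root_system =
  fixes \<Phi> :: "'a::euclidean_space set" and \<Delta> :: "'a set"
  assumes root_system: "root_system \<Phi>" and simple_system: "simple_system \<Phi> \<Delta>"
begin

abbreviation "P \<equiv> pos_roots \<Phi> \<Delta>"
abbreviation "W \<equiv> weyl \<Delta>"
abbreviation "I \<equiv> inv_set \<Phi> \<Delta>"
abbreviation "N w \<equiv> inv_set \<Phi> \<Delta> (inv w)"
abbreviation "cf \<equiv> representation \<Delta>"

lemma finite_roots: "finite \<Phi>"
  using root_system unfolding root_system_def by (elim conjE)

lemma zero_not_root: "0 \<notin> \<Phi>"
  using root_system unfolding root_system_def by (elim conjE)

lemma refl_root: "\<alpha> \<in> \<Phi> \<Longrightarrow> \<beta> \<in> \<Phi> \<Longrightarrow> refl \<alpha> \<beta> \<in> \<Phi>"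
  using root_system unfolding root_system_def by (elim conjE) blast

lemma root_multiple: "\<alpha> \<in> \<Phi> \<Longrightarrow> c *\<^sub>R \<alpha> \<in> \<Phi> \<Longrightarrow> c = 1 \<or> c = -1"
  using root_system unfolding root_system_def by (elim conjE) blast

lemma simple_subset_roots: "\<Delta> \<subseteq> \<Phi>"
  using simple_system unfolding simple_system_def by (elim conjE)

lemma independent_simple: "independent \<Delta>"
  using simple_system unfolding simple_system_def by (elim conjE)

lemma root_nonneg_comb: "\<beta> \<in> \<Phi> \<Longrightarrow> nonneg_comb \<Delta> \<beta> \<or> nonneg_comb \<Delta> (- \<beta>)"
  using simple_system unfolding simple_system_def by (elim conjE) blast

lemma finite_simple: "finite \<Delta>"
  using simple_subset_roots finite_roots finite_subset by blast

lemma zero_not_simple: "0 \<notin> \<Delta>"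
  using simple_subset_roots zero_not_root by blast

lemma neg_root: "\<beta> \<in> \<Phi> \<Longrightarrow> - \<beta> \<in> \<Phi>"
  using refl_root[of \<beta> \<beta>] refl_self[of \<beta>] zero_not_root by fastforce

lemma nonneg_comb_in_span: "nonneg_comb \<Delta> \<beta> \<Longrightarrow> \<beta> \<in> span \<Delta>"
  unfolding nonneg_comb_def by (auto intro!: span_sum intro: span_scale span_base)

lemma cf_nonneg_comb: "nonneg_comb \<Delta> \<beta> \<Longrightarrow> \<delta> \<in> \<Delta> \<Longrightarrow> cf \<beta> \<delta> \<ge> 0"
  unfolding nonneg_comb_def using representation_sum_eq[OF finite_simple independent_simple] by fastforce

lemma root_in_span: "\<beta> \<in> \<Phi> \<Longrightarrow> \<beta> \<in> span \<Delta>"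
  using root_nonneg_comb nonneg_comb_in_span span_neg by fastforce

lemma sum_cf: "\<beta> \<in> span \<Delta> \<Longrightarrow> (\<Sum>\<delta>\<in>\<Delta>. cf \<beta> \<delta> *\<^sub>R \<delta>) = \<beta>"
  using sum_representation_eq[OF independent_simple _ finite_simple] by simp

lemma cf_eq_0_imp_zero: "\<beta> \<in> span \<Delta> \<Longrightarrow> (\<And>\<delta>. \<delta> \<in> \<Delta> \<Longrightarrow> cf \<beta> \<delta> = 0) \<Longrightarrow> \<beta> = 0"
  using sum_cf by (metis (no_types, lifting) scale_zero_left sum.neutral)

lemma cf_neg: "\<beta> \<in> span \<Delta> \<Longrightarrow> cf (- \<beta>) \<delta> = - cf \<beta> \<delta>"
  using representation_neg[OF independent_simple] by simp

lemma cf_add: "\<beta> \<in> span \<Delta> \<Longrightarrow> \<gamma> \<in> span \<Delta> \<Longrightarrow> cf (\<beta> + \<gamma>) \<delta> = cf \<beta> \<delta> + cf \<gamma> \<delta>"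
  using representation_add[OF independent_simple] by simp

lemma cf_diff: "\<beta> \<in> span \<Delta> \<Longrightarrow> \<gamma> \<in> span \<Delta> \<Longrightarrow> cf (\<beta> - \<gamma>) \<delta> = cf \<beta> \<delta> - cf \<gamma> \<delta>"
  using representation_diff[OF independent_simple] by simp

lemma cf_scale: "\<beta> \<in> span \<Delta> \<Longrightarrow> cf (c *\<^sub>R \<beta>) \<delta> = c * cf \<beta> \<delta>"
  using representation_scale[OF independent_simple] by simp

lemma cf_simple: "\<alpha> \<in> \<Delta> \<Longrightarrow> cf \<alpha> \<delta> = (if \<delta> = \<alpha> then 1 else 0)"
  using representation_basis[OF independent_simple] by simp

lemma cf_sum:
  assumes "finite S" "\<And>i. i \<in> S \<Longrightarrow> x i \<in> span \<Delta>"
  shows "cf (\<Sum>i\<in>S. c i *\<^sub>R x i) \<delta> = (\<Sum>i\<in>S. c i * cf (x i) \<delta>)"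
  using assms
proof (induction S rule: finite_induct)
  case (insert j S)
  then have "cf (c j *\<^sub>R x j + (\<Sum>i\<in>S. c i *\<^sub>R x i)) \<delta>
      = cf (c j *\<^sub>R x j) \<delta> + cf (\<Sum>i\<in>S. c i *\<^sub>R x i) \<delta>"
    by (intro cf_add) (auto intro!: span_sum span_scale)
  with insert show ?case by (simp add: cf_scale)
qed (simp add: representation_zero)

lemma cf_in_sub_span:
  assumes "J \<subseteq> \<Delta>" "\<beta> \<in> span J"
  shows "(\<Sum>\<delta>\<in>J. cf \<beta> \<delta> *\<^sub>R \<delta>) = \<beta>" and "\<delta> \<notin> J \<Longrightarrow> cf \<beta> \<delta> = 0"
proof -
  have "cf \<beta> = representation J \<beta>"
    by (rule representation_extend[OF independent_simple assms(2,1)])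
  moreover have "independent J" "finite J"
    using assms(1) independent_simple dependent_mono finite_simple finite_subset by blast+
  ultimately show "(\<Sum>\<delta>\<in>J. cf \<beta> \<delta> *\<^sub>R \<delta>) = \<beta>" "\<delta> \<notin> J \<Longrightarrow> cf \<beta> \<delta> = 0"
    using sum_representation_eq[OF _ assms(2)] representation_ne_zero by auto
qed

lemma pos_roots_subset: "P \<subseteq> \<Phi>"
  by (auto simp: pos_roots_def)

lemma finite_pos_roots: "finite P"
  using pos_roots_subset finite_roots finite_subset by blast

lemma cf_pos_root: "\<beta> \<in> P \<Longrightarrow> \<delta> \<in> \<Delta> \<Longrightarrow> cf \<beta> \<delta> \<ge> 0"
  by (auto simp: pos_roots_def cf_nonneg_comb)

lemma pos_rootI:
  assumes "\<beta> \<in> \<Phi>" "\<And>\<delta>. \<delta> \<in> \<Delta> \<Longrightarrow> cf \<beta> \<delta> \<ge> 0"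
  shows "\<beta> \<in> P"
proof (rule ccontr)
  assume "\<beta> \<notin> P"
  then have "nonneg_comb \<Delta> (- \<beta>)"
    using root_nonneg_comb assms(1) by (auto simp: pos_roots_def)
  then have "cf \<beta> \<delta> = 0" if "\<delta> \<in> \<Delta>" for \<delta>
    using cf_nonneg_comb assms(2)[OF that] that cf_neg[OF root_in_span[OF assms(1)]] by fastforce
  then have "\<beta> = 0" using cf_eq_0_imp_zero root_in_span assms(1) by blast
  then show False using assms(1) zero_not_root by simp
qed

lemma root_pos_or_neg: "\<beta> \<in> \<Phi> \<Longrightarrow> \<beta> \<in> P \<or> - \<beta> \<in> P"
  using root_nonneg_comb neg_root by (auto simp: pos_roots_def)

lemma pos_root_neg_not_pos: "\<beta> \<in> P \<Longrightarrow> - \<beta> \<notin> P"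
proof
  assume pos: "\<beta> \<in> P" "- \<beta> \<in> P"
  then have "\<beta> \<in> span \<Delta>" using root_in_span pos_roots_subset by blast
  with pos have "cf \<beta> \<delta> = 0" if "\<delta> \<in> \<Delta>" for \<delta>
    using cf_pos_root[OF pos(1) that] cf_pos_root[OF pos(2) that] cf_neg[of \<beta> \<delta>] by simp
  then show False
    using cf_eq_0_imp_zero \<open>\<beta> \<in> span \<Delta>\<close> pos zero_not_root pos_roots_subset by blast
qed

lemma simple_pos_root: "\<alpha> \<in> \<Delta> \<Longrightarrow> \<alpha> \<in> P"
  using simple_subset_roots by (intro pos_rootI) (auto simp: cf_simple)

lemma pos_root_if_cf_pos:
  assumes "\<beta> \<in> \<Phi>" "\<delta> \<in> \<Delta>" "cf \<beta> \<delta> > 0"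
  shows "\<beta> \<in> P"
  using assms root_pos_or_neg[OF assms(1)] cf_pos_root[of "- \<beta>" \<delta>]
    cf_neg[OF root_in_span[OF assms(1)], of \<delta>] by force

lemma pos_root_eq_simple:
  assumes \<gamma>: "\<gamma> \<in> P" and \<delta>: "\<delta> \<in> \<Delta>" and zero: "\<And>\<epsilon>. \<epsilon> \<in> \<Delta> \<Longrightarrow> \<epsilon> \<noteq> \<delta> \<Longrightarrow> cf \<gamma> \<epsilon> = 0"
  shows "\<gamma> = \<delta>"
proof -
  have "\<gamma> \<in> \<Phi>" using \<gamma> pos_roots_subset by blast
  have "(\<Sum>\<epsilon>\<in>\<Delta>. cf \<gamma> \<epsilon> *\<^sub>R \<epsilon>) = cf \<gamma> \<delta> *\<^sub>R \<delta>"
    using zero by (subst sum.remove[OF finite_simple \<delta>]) simp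
  then have eq_cf: "\<gamma> = cf \<gamma> \<delta> *\<^sub>R \<delta>"
    using sum_cf[OF root_in_span[OF \<open>\<gamma> \<in> \<Phi>\<close>]] by (rule box_equals) simp_all
  define k where "k = cf \<gamma> \<delta>"
  have eq: "\<gamma> = k *\<^sub>R \<delta>"
    using eq_cf unfolding k_def .
  then have "k = 1 \<or> k = -1"
    using root_multiple simple_subset_roots \<delta> \<open>\<gamma> \<in> \<Phi>\<close> by auto
  moreover have "k \<ge> 0"
    unfolding k_def using cf_pos_root[OF \<gamma> \<delta>] .
  ultimately show ?thesis
    using eq by auto
qed

lemma refl_simple_pos_root:
  assumes a: "\<alpha> \<in> \<Delta>" and b: "\<beta> \<in> P" "\<beta> \<noteq> \<alpha>"
  shows "refl \<alpha> \<beta> \<in> P"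
proof -
  have \<beta>: "\<beta> \<in> \<Phi>" "\<beta> \<in> span \<Delta>" using b pos_roots_subset root_in_span by auto
  have "\<exists>\<delta>\<in>\<Delta>. \<delta> \<noteq> \<alpha> \<and> cf \<beta> \<delta> > 0"
  proof (rule ccontr)
    assume "\<not> ?thesis"
    then have "cf \<beta> \<delta> = 0" if "\<delta> \<in> \<Delta>" "\<delta> \<noteq> \<alpha>" for \<delta>
      using cf_pos_root[OF b(1)] that by force
    then show False
      using pos_root_eq_simple[OF b(1) a] b(2) by blast
  qed
  then obtain \<delta> where \<delta>: "\<delta> \<in> \<Delta>" "\<delta> \<noteq> \<alpha>" "cf \<beta> \<delta> > 0" by blast
  have "cf (refl \<alpha> \<beta>) \<delta> = cf \<beta> \<delta>"
    unfolding refl_def using \<delta> a \<beta>(2)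
    by (simp add: cf_diff span_scale span_base cf_scale cf_simple)
  then show ?thesis
    using pos_root_if_cf_pos[OF refl_root \<delta>(1)] \<delta>(3) a \<beta>(1) simple_subset_roots by auto
qed

lemma weyl_root: "w \<in> W \<Longrightarrow> \<beta> \<in> \<Phi> \<Longrightarrow> w \<beta> \<in> \<Phi>"
  by (induction arbitrary: \<beta> rule: weyl.induct) (use refl_root simple_subset_roots in auto)

lemma weyl_pos_root_cases: "w \<in> W \<Longrightarrow> \<beta> \<in> P \<Longrightarrow> w \<beta> \<in> P \<or> - w \<beta> \<in> P"
  using root_pos_or_neg weyl_root pos_roots_subset by blast

lemma pos_root_image_of_simple:
  assumes f: "linear f" and J: "J \<subseteq> \<Delta>" and simple: "\<And>\<delta>. \<delta> \<in> J \<Longrightarrow> f \<delta> \<in> P"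
    and \<beta>: "\<beta> \<in> P" "\<beta> \<in> span J" and f\<beta>: "f \<beta> \<in> \<Phi>"
  shows "f \<beta> \<in> P"
proof (rule pos_rootI[OF f\<beta>])
  have "finite J" using J finite_simple finite_subset by blast
  fix \<delta>' assume "\<delta>' \<in> \<Delta>"
  have "f \<beta> = f (\<Sum>\<delta>\<in>J. cf \<beta> \<delta> *\<^sub>R \<delta>)"
    using cf_in_sub_span(1)[OF J \<beta>(2)] by simp
  also have "\<dots> = (\<Sum>\<delta>\<in>J. cf \<beta> \<delta> *\<^sub>R f \<delta>)"
    using f by (simp add: linear_sum linear_scale)
  also have "cf \<dots> \<delta>' = (\<Sum>\<delta>\<in>J. cf \<beta> \<delta> * cf (f \<delta>) \<delta>')"
    using \<open>finite J\<close> simple pos_roots_subset root_in_span by (intro cf_sum) auto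
  also have "\<dots> \<ge> 0"
    using simple J \<beta>(1) \<open>\<delta>' \<in> \<Delta>\<close> by (intro sum_nonneg mult_nonneg_nonneg) (auto intro: cf_pos_root)
  finally show "cf (f \<beta>) \<delta>' \<ge> 0" .
qed

lemmas W_linear = weyl_linear[OF zero_not_simple]
lemmas W_inv = weyl_inv[OF zero_not_simple]
lemmas W_inv_apply = weyl_inv_apply[OF zero_not_simple]
lemmas W_inj = weyl_inj[OF zero_not_simple]
lemmas W_neg = weyl_neg[OF zero_not_simple]
lemmas W_inv_comp = weyl_inv_comp[OF zero_not_simple]
lemmas W_inv_inv = weyl_inv_inv[OF zero_not_simple]

lemma W_inv_in: "w \<in> W \<Longrightarrow> inv w \<in> W"
  using W_inv by blast

section \<open>Inversion sets and length\<close>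

lemma inv_set_iff: "\<beta> \<in> I w \<longleftrightarrow> \<beta> \<in> P \<and> - w \<beta> \<in> P"
  by (simp add: inv_set_def)

lemma inv_set_subset: "I w \<subseteq> P"
  by (auto simp: inv_set_def)

lemma finite_inv_set: "finite (I w)"
  using inv_set_subset finite_pos_roots finite_subset by blast

lemma inv_set_id [simp]: "I id = {}" "I (\<lambda>x. x) = {}"
  using pos_root_neg_not_pos by (auto simp: inv_set_iff)

lemma inv_set_comp_refl_remove:
  assumes a: "\<alpha> \<in> \<Delta>"
  shows "I (w \<circ> refl \<alpha>) - {\<alpha>} = refl \<alpha> ` (I w - {\<alpha>})"
proof -
  have a0: "\<alpha> \<noteq> 0" using a zero_not_simple by auto
  have ne: "refl \<alpha> \<beta> \<noteq> \<alpha>" if "\<beta> \<in> P" for \<beta>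
  proof
    assume "refl \<alpha> \<beta> = \<alpha>"
    then have "\<beta> = - \<alpha>" using refl_refl[OF a0, of \<beta>] refl_self[OF a0] by simp
    then show False using that pos_root_neg_not_pos[OF simple_pos_root[OF a]] by simp
  qed
  have *: "refl \<alpha> \<beta> \<in> I w - {\<alpha>} \<longleftrightarrow> \<beta> \<in> I (w \<circ> refl \<alpha>) - {\<alpha>}" if "\<beta> \<in> P" for \<beta>
    using ne[OF that] that refl_simple_pos_root[OF a that] refl_self[OF a0]
      pos_root_neg_not_pos[OF simple_pos_root[OF a]] by (auto simp: inv_set_iff)
  have **: "refl \<alpha> \<beta> \<in> I w - {\<alpha>} \<Longrightarrow> \<beta> \<in> P" for \<beta>
    using refl_simple_pos_root[OF a, of "refl \<alpha> \<beta>"] refl_refl[OF a0] by (auto simp: inv_set_iff)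
  show ?thesis
  proof (intro equalityI subsetI)
    fix \<beta> assume "\<beta> \<in> I (w \<circ> refl \<alpha>) - {\<alpha>}"
    then show "\<beta> \<in> refl \<alpha> ` (I w - {\<alpha>})"
      using * refl_refl[OF a0] inv_set_subset by (metis DiffD1 image_eqI subsetD)
  next
    fix \<beta> assume "\<beta> \<in> refl \<alpha> ` (I w - {\<alpha>})"
    then obtain \<gamma> where "\<gamma> \<in> I w - {\<alpha>}" "\<beta> = refl \<alpha> \<gamma>" by blast
    then show "\<beta> \<in> I (w \<circ> refl \<alpha>) - {\<alpha>}"
      using *[of \<beta>] **[of \<beta>] refl_refl[OF a0] by simp
  qed
qed

lemma card_inv_set_comp_refl:
  assumes w: "w \<in> W" and a: "\<alpha> \<in> \<Delta>"
  shows "w \<alpha> \<in> P \<Longrightarrow> card (I (w \<circ> refl \<alpha>)) = Suc (card (I w))"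
    and "- w \<alpha> \<in> P \<Longrightarrow> Suc (card (I (w \<circ> refl \<alpha>))) = card (I w)"
proof -
  have a0: "\<alpha> \<noteq> 0" using a zero_not_simple by auto
  have same: "card (I (w \<circ> refl \<alpha>) - {\<alpha>}) = card (I w - {\<alpha>})"
    unfolding inv_set_comp_refl_remove[OF a]
    by (rule card_image[OF inj_on_subset[OF inj_refl[OF a0]]]) simp
  have in_ws: "\<alpha> \<in> I (w \<circ> refl \<alpha>) \<longleftrightarrow> w \<alpha> \<in> P" and in_w: "\<alpha> \<in> I w \<longleftrightarrow> - w \<alpha> \<in> P"
    using simple_pos_root[OF a] by (simp_all add: inv_set_iff refl_self[OF a0] W_neg[OF w])
  show "card (I (w \<circ> refl \<alpha>)) = Suc (card (I w))" if "w \<alpha> \<in> P"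
  proof -
    have "\<alpha> \<in> I (w \<circ> refl \<alpha>)" "\<alpha> \<notin> I w"
      using that in_ws in_w pos_root_neg_not_pos[OF that] by blast+
    then have "card (I (w \<circ> refl \<alpha>)) = Suc (card (I (w \<circ> refl \<alpha>) - {\<alpha>}))"
      "I w - {\<alpha>} = I w"
      using card.remove[OF finite_inv_set] by blast+
    then show ?thesis using same by simp
  qed
  show "Suc (card (I (w \<circ> refl \<alpha>))) = card (I w)" if "- w \<alpha> \<in> P"
  proof -
    have "\<alpha> \<notin> I (w \<circ> refl \<alpha>)" "\<alpha> \<in> I w"
      using that in_ws in_w pos_root_neg_not_pos[OF that] by simp_all
    then have "card (I w) = Suc (card (I w - {\<alpha>}))"
      "I (w \<circ> refl \<alpha>) - {\<alpha>} = I (w \<circ> refl \<alpha>)"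
      using card.remove[OF finite_inv_set] by blast+
    then show ?thesis using same by simp
  qed
qed

lemma exchange_condition:
  assumes "set xs \<subseteq> \<Delta>" "\<delta> \<in> \<Delta>" "- word_prod xs \<delta> \<in> P"
  shows "\<exists>ys. set ys \<subseteq> \<Delta> \<and> Suc (length ys) = length xs \<and> word_prod xs \<circ> refl \<delta> = word_prod ys"
  using assms
proof (induction xs)
  case Nil
  then show ?case using simple_pos_root pos_root_neg_not_pos by auto
next
  case (Cons a xs)
  let ?\<gamma> = "word_prod xs \<delta>"
  have a: "a \<in> \<Delta>" and xs: "set xs \<subseteq> \<Delta>" using Cons.prems by auto
  show ?case
  proof (cases "?\<gamma> \<in> P")
    case False
    then have "- ?\<gamma> \<in> P"
      using root_pos_or_neg weyl_root[OF word_prod_in_weyl[OF xs]] Cons.prems(2) simple_subset_roots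
      by blast
    then obtain ys where ys: "set ys \<subseteq> \<Delta>" "Suc (length ys) = length xs"
      "word_prod xs \<circ> refl \<delta> = word_prod ys"
      using Cons.IH xs Cons.prems(2) by blast
    then have "word_prod (a # xs) \<circ> refl \<delta> = word_prod (a # ys)"
      by (simp only: word_prod_Cons comp_assoc)
    moreover have "set (a # ys) \<subseteq> \<Delta>" "Suc (length (a # ys)) = length (a # xs)"
      using ys a by auto
    ultimately show ?thesis by blast
  next
    case True
    then have "?\<gamma> = a"
      using Cons.prems(3) refl_simple_pos_root[OF a] pos_root_neg_not_pos by auto
    then have "word_prod xs \<circ> refl \<delta> = refl a \<circ> word_prod xs"
      using weyl_conj_refl[OF zero_not_simple word_prod_in_weyl[OF xs]] by simp
    then have "word_prod (a # xs) \<circ> refl \<delta> = (refl a \<circ> refl a) \<circ> word_prod xs"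
      by (simp add: comp_assoc)
    then have "word_prod (a # xs) \<circ> refl \<delta> = word_prod xs"
      using a zero_not_simple by (metis refl_comp_refl id_comp)
    moreover have "Suc (length xs) = length (a # xs)" by simp
    ultimately show ?thesis using xs by blast
  qed
qed

lemma reduced_word_exists:
  assumes "set xs \<subseteq> \<Delta>"
  shows "\<exists>ys. set ys \<subseteq> \<Delta> \<and> word_prod ys = word_prod xs \<and> length ys = card (I (word_prod xs))"
  using assms
proof (induction xs rule: rev_induct)
  case Nil
  show ?case by (rule exI[of _ "[]"]) (simp add: inv_set_id)
next
  case (snoc a xs)
  have a: "a \<in> \<Delta>" and xs: "set xs \<subseteq> \<Delta>" using snoc.prems by auto
  let ?w = "word_prod xs"
  have w: "?w \<in> W" using word_prod_in_weyl[OF xs] .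
  obtain ys where ys: "set ys \<subseteq> \<Delta>" "word_prod ys = ?w" "length ys = card (I ?w)"
    using snoc.IH xs by blast
  show ?case
  proof (cases "?w a \<in> P")
    case True
    have "word_prod (ys @ [a]) = word_prod (xs @ [a])"
      unfolding word_prod_snoc ys(2) ..
    moreover have "length (ys @ [a]) = card (I (word_prod (xs @ [a])))"
      unfolding word_prod_snoc using ys(3) card_inv_set_comp_refl(1)[OF w a True] by simp
    ultimately show ?thesis
      using ys(1) a by (intro exI[of _ "ys @ [a]"]) simp
  next
    case False
    then have "- ?w a \<in> P" using weyl_pos_root_cases[OF w simple_pos_root[OF a]] by auto
    moreover obtain zs where "set zs \<subseteq> \<Delta>" "Suc (length zs) = length ys"
      "word_prod ys \<circ> refl a = word_prod zs"
      using exchange_condition[OF ys(1) a] calculation ys(2) by auto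
    ultimately show ?thesis
      using ys card_inv_set_comp_refl(2)[OF w a]
      by (intro exI[of _ zs]) (simp only: word_prod_snoc, simp)
  qed
qed

lemma card_inv_set_word_le: "set xs \<subseteq> \<Delta> \<Longrightarrow> card (I (word_prod xs)) \<le> length xs"
proof (induction xs rule: rev_induct)
  case (snoc a xs)
  have a: "a \<in> \<Delta>" and xs: "set xs \<subseteq> \<Delta>" using snoc.prems by auto
  have w: "word_prod xs \<in> W" using word_prod_in_weyl[OF xs] .
  have "card (I (word_prod xs \<circ> refl a)) \<le> Suc (card (I (word_prod xs)))"
    using card_inv_set_comp_refl[OF w a] weyl_pos_root_cases[OF w simple_pos_root[OF a]] by fastforce
  then show ?case
    using snoc.IH xs unfolding word_prod_snoc length_append_singleton by linarith
qed simp

lemma len_eq_card_inv_set: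
  assumes w: "w \<in> W"
  shows "len \<Delta> w = card (I w)"
proof -
  obtain xs where xs: "set xs \<subseteq> \<Delta>" "w = word_prod xs" using w by (auto simp: weyl_iff_word)
  obtain ys where ys: "set ys \<subseteq> \<Delta>" "word_prod ys = w" "length ys = card (I w)"
    using reduced_word_exists[OF xs(1)] xs(2) by auto
  let ?Q = "\<lambda>n. \<exists>as. length as = n \<and> set as \<subseteq> \<Delta> \<and> w = word_prod as"
  have "len \<Delta> w \<le> card (I w)" unfolding len_def
    by (rule Least_le) (use ys in auto)
  moreover have "?Q (len \<Delta> w)" unfolding len_def
    by (rule LeastI[of ?Q]) (use ys in auto)
  then have "card (I w) \<le> len \<Delta> w" using card_inv_set_word_le by metis
  ultimately show ?thesis by simp
qed

lemma inv_set_empty_imp_id: "w \<in> W \<Longrightarrow> I w = {} \<Longrightarrow> w = id"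
  using reduced_word_exists by (fastforce simp: weyl_iff_word)

lemma card_inv_set_inv:
  assumes w: "w \<in> W"
  shows "card (I (inv w)) = card (I w)"
proof -
  have le: "card (I (inv v)) \<le> card (I v)" if v: "v \<in> W" for v
  proof -
    obtain xs where "set xs \<subseteq> \<Delta>" "v = word_prod xs" using v by (auto simp: weyl_iff_word)
    then obtain ys where ys: "set ys \<subseteq> \<Delta>" "word_prod ys = v" "length ys = card (I v)"
      using reduced_word_exists by metis
    then have "0 \<notin> set ys" using zero_not_simple by auto
    then have "inv v = word_prod (rev ys)"
      using word_prod_rev_comp[of ys] word_prod_rev_comp[of "rev ys"] ys by (auto intro: inv_unique_comp)
    then show ?thesis using card_inv_set_word_le[of "rev ys"] ys by simp
  qed
  show ?thesis using le[OF w] le[OF W_inv_in[OF w]] W_inv_inv[OF w] by simp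
qed

lemma image_inv_set_comp_pos:
  assumes x: "x \<in> W" and y: "y \<in> W"
  shows "y ` {\<beta> \<in> I (x \<circ> y). y \<beta> \<in> P} = I x - N y"
proof (intro equalityI subsetI)
  fix \<gamma> assume "\<gamma> \<in> y ` {\<beta> \<in> I (x \<circ> y). y \<beta> \<in> P}"
  then show "\<gamma> \<in> I x - N y"
    using W_inv_apply[OF y] pos_root_neg_not_pos by (auto simp: inv_set_iff)
next
  fix \<gamma> assume "\<gamma> \<in> I x - N y"
  then have "inv y \<gamma> \<in> P" "- x \<gamma> \<in> P" "\<gamma> \<in> P"
    using weyl_pos_root_cases[OF W_inv_in[OF y]] by (auto simp: inv_set_iff)
  then show "\<gamma> \<in> y ` {\<beta> \<in> I (x \<circ> y). y \<beta> \<in> P}"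
    using W_inv_apply(2)[OF y] by (intro image_eqI[of _ _ "inv y \<gamma>"]) (auto simp: inv_set_iff)
qed

lemma image_inv_set_comp_neg:
  assumes x: "x \<in> W" and y: "y \<in> W"
  shows "(\<lambda>\<beta>. - y \<beta>) ` {\<beta> \<in> I (x \<circ> y). - y \<beta> \<in> P} = N y - I x"
proof (intro equalityI subsetI)
  fix \<gamma> assume "\<gamma> \<in> (\<lambda>\<beta>. - y \<beta>) ` {\<beta> \<in> I (x \<circ> y). - y \<beta> \<in> P}"
  then show "\<gamma> \<in> N y - I x"
    using W_inv_apply[OF y] W_neg[OF W_inv_in[OF y]] W_neg[OF x] pos_root_neg_not_pos
    by (auto simp: inv_set_iff)
next
  fix \<gamma> assume "\<gamma> \<in> N y - I x"
  then have "\<gamma> \<in> P" "- inv y \<gamma> \<in> P" "x \<gamma> \<in> P"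
    using weyl_pos_root_cases[OF x] by (auto simp: inv_set_iff)
  moreover have "y (- inv y \<gamma>) = - \<gamma>"
    using W_neg[OF y] W_inv_apply[OF y] by simp
  ultimately show "\<gamma> \<in> (\<lambda>\<beta>. - y \<beta>) ` {\<beta> \<in> I (x \<circ> y). - y \<beta> \<in> P}"
    using W_neg[OF x] by (intro image_eqI[of _ _ "- inv y \<gamma>"]) (auto simp: inv_set_iff)
qed

lemma card_inv_set_comp:
  assumes x: "x \<in> W" and y: "y \<in> W"
  shows "card (I (x \<circ> y)) + 2 * card (I x \<inter> N y) = card (I x) + card (N y)"
proof -
  define S1 where "S1 = {\<beta> \<in> I (x \<circ> y). y \<beta> \<in> P}"
  define S2 where "S2 = {\<beta> \<in> I (x \<circ> y). - y \<beta> \<in> P}"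
  have "I (x \<circ> y) = S1 \<union> S2" "S1 \<inter> S2 = {}"
    using weyl_pos_root_cases[OF y] inv_set_subset pos_root_neg_not_pos
    unfolding S1_def S2_def by blast+
  moreover have "finite S1" "finite S2"
    using finite_inv_set unfolding S1_def S2_def by auto
  ultimately have "card (I (x \<circ> y)) = card S1 + card S2"
    by (simp add: card_Un_disjoint)
  moreover have "card S1 = card (I x - N y)"
    using image_inv_set_comp_pos[OF x y] card_image W_inj[OF y] unfolding S1_def
    by (metis (no_types, lifting) inj_onI)
  moreover have "card S2 = card (N y - I x)"
    using image_inv_set_comp_neg[OF x y] card_image W_inj[OF y] unfolding S2_def
    by (metis (no_types, lifting) inj_onI neg_equal_iff_equal)
  moreover have "card (I x) = card (I x \<inter> N y) + card (I x - N y)"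
    by (rule card_Int_Diff[OF finite_inv_set])
  moreover have "card (N y) = card (I x \<inter> N y) + card (N y - I x)"
    using card_Int_Diff[OF finite_inv_set, of "inv y" "I x"] by (simp add: Int_commute)
  ultimately show ?thesis by linarith
qed

lemma len_comp_eq_add_iff:
  assumes x: "x \<in> W" and y: "y \<in> W"
  shows "len \<Delta> (x \<circ> y) = len \<Delta> x + len \<Delta> y \<longleftrightarrow> I x \<inter> N y = {}"
proof -
  have "len \<Delta> (x \<circ> y) = len \<Delta> x + len \<Delta> y \<longleftrightarrow> card (I (x \<circ> y)) = card (I x) + card (I y)"
    using len_eq_card_inv_set[OF weyl_comp[OF x y]] len_eq_card_inv_set x y by simp
  also have "\<dots> \<longleftrightarrow> I x \<inter> N y = {}"
    using card_inv_set_comp[OF x y] card_inv_set_inv[OF y] finite_inv_set by auto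
  finally show ?thesis .
qed

section \<open>The longest element\<close>

definition w0 :: "'a \<Rightarrow> 'a" where
  "w0 = (SOME w. w \<in> W \<and> (\<forall>\<beta>\<in>P. - w \<beta> \<in> P))"

text \<open>An element of maximal length sends every simple root, hence every positive root, to a negative one.\<close>
lemma longest_element_exists: "\<exists>w. w \<in> W \<and> (\<forall>\<beta>\<in>P. - w \<beta> \<in> P)"
proof -
  have "\<exists>w. w \<in> W \<and> (\<forall>v. v \<in> W \<longrightarrow> card (I v) \<le> card (I w))"
    by (rule ex_has_greatest_nat[of "\<lambda>w. w \<in> W" id _ "Suc (card P)"])
       (use weyl_id card_mono[OF finite_pos_roots inv_set_subset] in \<open>auto simp: le_imp_less_Suc\<close>)
  then obtain w where w: "w \<in> W" and max: "\<And>v. v \<in> W \<Longrightarrow> card (I v) \<le> card (I w)"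
    by blast
  have "- w \<delta> \<in> P" if "\<delta> \<in> \<Delta>" for \<delta>
  proof (rule ccontr)
    assume "- w \<delta> \<notin> P"
    then have "card (I (w \<circ> refl \<delta>)) = Suc (card (I w))"
      using card_inv_set_comp_refl(1)[OF w that] weyl_pos_root_cases[OF w simple_pos_root[OF that]]
      by simp
    then show False
      using max[OF weyl_comp[OF w weyl_refl[OF that]]] by simp
  qed
  moreover have "linear (\<lambda>x. - w x)"
    using W_linear[OF w] by (simp add: linear_compose_neg)
  ultimately have "- w \<beta> \<in> P" if "\<beta> \<in> P" for \<beta>
    using pos_root_image_of_simple[of "\<lambda>x. - w x" \<Delta> \<beta>] that root_in_span pos_roots_subset
      weyl_root[OF w] neg_root by blast
  with w show ?thesis by blast
qed

lemma w0: "w0 \<in> W" "\<And>\<beta>. \<beta> \<in> P \<Longrightarrow> - w0 \<beta> \<in> P"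
  using someI_ex[OF longest_element_exists] unfolding w0_def[symmetric] by auto

lemma inv_set_w0_comp:
  assumes z: "z \<in> W"
  shows "I (w0 \<circ> z) = P - I z"
proof -
  have "- w0 (z \<beta>) \<in> P \<longleftrightarrow> - z \<beta> \<notin> P" if "\<beta> \<in> P" for \<beta>
    using weyl_pos_root_cases[OF z that] w0(2)[of "- z \<beta>"] w0(2)[of "z \<beta>"]
      W_neg[OF w0(1)] pos_root_neg_not_pos by force
  then show ?thesis
    by (auto simp: inv_set_iff)
qed

lemma w0_comp_w0: "w0 \<circ> w0 = id"
  using inv_set_w0_comp[OF w0(1)] inv_set_w0_comp[OF weyl_id]
  by (metis Diff_cancel Diff_empty comp_id inv_set_empty_imp_id inv_set_id(1) w0(1) weyl_comp)

lemma w0_w0 [simp]: "w0 (w0 x) = x"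
  using w0_comp_w0 by (metis comp_apply id_apply)

lemma inv_w0: "inv w0 = w0"
  using w0_comp_w0 by (metis inv_unique_comp)

abbreviation opp :: "'a \<Rightarrow> 'a" where
  "opp \<beta> \<equiv> - w0 \<beta>"

lemma opp_opp [simp]: "opp (opp \<beta>) = \<beta>"
  using W_neg[OF w0(1), of "w0 \<beta>"] by simp

lemma opp_in_pos_roots_iff [simp]: "opp \<beta> \<in> P \<longleftrightarrow> \<beta> \<in> P"
  using w0(2)[of \<beta>] w0(2)[of "opp \<beta>"] by auto

lemma inj_opp: "inj opp"
  by (metis injI opp_opp)

lemma mem_opp_image_iff: "\<beta> \<in> opp ` A \<longleftrightarrow> opp \<beta> \<in> A"
proof
  assume "opp \<beta> \<in> A"
  then show "\<beta> \<in> opp ` A" using image_eqI[of \<beta> opp "opp \<beta>"] by simp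
qed auto

lemma opp_pos_roots: "opp ` P = P"
  by (auto simp: mem_opp_image_iff)

lemma inv_set_w0_conj:
  assumes z: "z \<in> W"
  shows "I (w0 \<circ> z \<circ> w0) = opp ` I z"
proof -
  have "- (w0 \<circ> z \<circ> w0) \<beta> = opp (- z (opp \<beta>))" for \<beta>
    using W_neg[OF z] W_neg[OF w0(1)] by simp
  then have "\<beta> \<in> I (w0 \<circ> z \<circ> w0) \<longleftrightarrow> opp \<beta> \<in> I z" for \<beta>
    by (simp only: inv_set_iff opp_in_pos_roots_iff)
  then show ?thesis
    by (simp only: set_eq_iff mem_opp_image_iff simp_thms)
qed

definition w0_anti :: "('a \<Rightarrow> 'a) \<Rightarrow> ('a \<Rightarrow> 'a)" where
  "w0_anti z = w0 \<circ> inv z \<circ> w0"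

lemma w0_anti_weyl: "z \<in> W \<Longrightarrow> w0_anti z \<in> W"
  unfolding w0_anti_def using w0(1) weyl_comp W_inv_in by blast

lemma w0_anti_w0_anti: "z \<in> W \<Longrightarrow> w0_anti (w0_anti z) = z"
  unfolding w0_anti_def
  using W_inv_comp[OF weyl_comp[OF w0(1) W_inv_in] w0(1)] W_inv_comp[OF w0(1) W_inv_in]
  by (simp add: inv_w0 W_inv_inv fun_eq_iff)

lemma w0_anti_comp: "x \<in> W \<Longrightarrow> y \<in> W \<Longrightarrow> w0_anti (x \<circ> y) = w0_anti y \<circ> w0_anti x"
  unfolding w0_anti_def by (simp add: W_inv_comp fun_eq_iff)

lemma inv_set_w0_anti: "z \<in> W \<Longrightarrow> I (w0_anti z) = opp ` N z"
  unfolding w0_anti_def by (rule inv_set_w0_conj[OF W_inv_in])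

lemma inv_w0_anti: "z \<in> W \<Longrightarrow> inv (w0_anti z) = w0 \<circ> z \<circ> w0"
  unfolding w0_anti_def
  using W_inv_comp[OF weyl_comp[OF w0(1) W_inv_in] w0(1)] W_inv_comp[OF w0(1) W_inv_in]
  by (simp add: inv_w0 W_inv_inv fun_eq_iff)

lemma inv_set_inv_w0_anti: "z \<in> W \<Longrightarrow> N (w0_anti z) = opp ` I z"
  by (simp add: inv_w0_anti inv_set_w0_conj)

lemma inv_set_inv_w0_comp:
  assumes u: "u \<in> W"
  shows "N (w0 \<circ> u) = opp ` (P - N u)"
proof -
  have "inv (w0 \<circ> u) = w0 \<circ> w0_anti u"
    using W_inv_comp[OF w0(1) u] by (simp add: w0_anti_def inv_w0 fun_eq_iff)
  then have "N (w0 \<circ> u) = P - opp ` N u"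
    using inv_set_w0_comp[OF w0_anti_weyl[OF u]] inv_set_w0_anti[OF u] by simp
  also have "\<dots> = opp ` (P - N u)"
    using opp_pos_roots inj_opp by (simp add: image_set_diff)
  finally show ?thesis .
qed

definition right_quot :: "'a set \<Rightarrow> ('a \<Rightarrow> 'a) \<Rightarrow> ('a \<Rightarrow> 'a) set" where
  "right_quot J u = {x \<in> weyl J. I x \<inter> N u = {}}"

definition right_interval :: "'a set \<Rightarrow> ('a \<Rightarrow> 'a) \<Rightarrow> ('a \<Rightarrow> 'a) set" where
  "right_interval J u = {y \<in> weyl J. N y \<subseteq> N u}"

definition splits :: "('a \<Rightarrow> 'a) \<Rightarrow> bool" where
  "splits u \<longleftrightarrow> bij_betw (\<lambda>(x, y). x \<circ> y) (right_quot \<Delta> u \<times> right_interval \<Delta> u) W"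

lemma splitting_if_splits:
  assumes u: "u \<in> W" and "splits u"
  shows "splitting \<Delta> (gen_quot \<Delta> {v \<in> W. right_le \<Phi> \<Delta> v u}) {v \<in> W. right_le \<Phi> \<Delta> v u}"
proof -
  have B: "{v \<in> W. right_le \<Phi> \<Delta> v u} = right_interval \<Delta> u"
    by (simp add: right_interval_def right_le_def left_le_def)
  have add: "len \<Delta> (x \<circ> y) = len \<Delta> x + len \<Delta> y" if "x \<in> right_quot \<Delta> u" "y \<in> right_interval \<Delta> u" for x y
    using that len_comp_eq_add_iff by (auto simp: right_quot_def right_interval_def)
  have "gen_quot \<Delta> (right_interval \<Delta> u) = right_quot \<Delta> u"
  proof (intro equalityI subsetI)
    fix x assume "x \<in> gen_quot \<Delta> (right_interval \<Delta> u)"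
    moreover have "u \<in> right_interval \<Delta> u" using u by (simp add: right_interval_def)
    ultimately show "x \<in> right_quot \<Delta> u"
      using len_comp_eq_add_iff[OF _ u] by (auto simp: gen_quot_def right_quot_def)
  qed (use add in \<open>auto simp: gen_quot_def right_quot_def\<close>)
  with assms show ?thesis unfolding B splitting_def splits_def using add by simp
qed

lemma w0_anti_in_right_quot_iff:
  assumes "z \<in> W" "u \<in> W"
  shows "w0_anti z \<in> right_quot \<Delta> (w0 \<circ> u) \<longleftrightarrow> z \<in> right_interval \<Delta> u"
  using assms inv_set_subset[of "inv z"]
  by (auto simp: right_quot_def right_interval_def w0_anti_weyl inv_set_w0_anti
      inv_set_inv_w0_comp image_Int[OF inj_opp, symmetric])

lemma w0_anti_in_right_interval_iff:
  assumes "z \<in> W" "u \<in> W"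
  shows "w0_anti z \<in> right_interval \<Delta> (w0 \<circ> u) \<longleftrightarrow> z \<in> right_quot \<Delta> u"
  using assms inv_set_subset[of z]
  by (auto simp: right_quot_def right_interval_def w0_anti_weyl inv_set_inv_w0_anti
      inv_set_inv_w0_comp inj_image_subset_iff[OF inj_opp])

lemma splits_w0_comp:
  assumes u: "u \<in> W" and "splits u"
  shows "splits (w0 \<circ> u)"
  unfolding splits_def
proof (rule bij_betw_mult_antiauto[OF \<open>splits u\<close>[unfolded splits_def]])
  show "right_quot \<Delta> u \<subseteq> W" "right_interval \<Delta> u \<subseteq> W"
    by (auto simp: right_quot_def right_interval_def)
  show "w0_anti ` right_interval \<Delta> u = right_quot \<Delta> (w0 \<circ> u)"
    using w0_anti_in_right_quot_iff[OF _ u] w0_anti_weyl w0_anti_w0_anti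
    by (auto simp: image_iff right_quot_def right_interval_def) metis
  show "w0_anti ` right_quot \<Delta> u = right_interval \<Delta> (w0 \<circ> u)"
    using w0_anti_in_right_interval_iff[OF _ u] w0_anti_weyl w0_anti_w0_anti
    by (auto simp: image_iff right_quot_def right_interval_def) metis
qed (auto simp: w0_anti_weyl w0_anti_w0_anti w0_anti_comp)

end

context based_root_system
begin

section \<open>Parabolic subgroups\<close>

lemma inv_set_meets_span_simple:
  assumes w: "w \<in> W" and J: "J \<subseteq> \<Delta>" and "I w \<inter> span J \<noteq> {}"
  shows "\<exists>\<delta>\<in>J. - w \<delta> \<in> P"
proof (rule ccontr)
  assume "\<not> ?thesis"
  then have "\<And>\<delta>. \<delta> \<in> J \<Longrightarrow> w \<delta> \<in> P"
    using weyl_pos_root_cases[OF w] simple_pos_root J by blast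
  then have "w \<beta> \<in> P" if "\<beta> \<in> P" "\<beta> \<in> span J" for \<beta>
    using pos_root_image_of_simple[OF W_linear[OF w] J] weyl_root[OF w] pos_roots_subset that
    by blast
  then show False
    using assms(3) pos_root_neg_not_pos by (auto simp: inv_set_iff)
qed

lemma nonneg_comb_restrict:
  assumes J: "J \<subseteq> \<Delta>" and "\<beta> \<in> span J" "nonneg_comb \<Delta> \<beta>"
  shows "nonneg_comb J \<beta>"
proof -
  obtain c where c: "\<beta> = (\<Sum>\<delta>\<in>\<Delta>. real (c \<delta>) *\<^sub>R \<delta>)"
    using assms(3) by (auto simp: nonneg_comb_def)
  have "real (c \<delta>) = 0" if "\<delta> \<in> \<Delta>" "\<delta> \<notin> J" for \<delta>
    using representation_sum_eq[OF finite_simple independent_simple that(1)] c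
      cf_in_sub_span(2)[OF J assms(2) that(2)] by simp
  then have "\<beta> = (\<Sum>\<delta>\<in>J. real (c \<delta>) *\<^sub>R \<delta>)"
    unfolding c by (intro sum.mono_neutral_right[OF finite_simple J]) auto
  then show ?thesis by (auto simp: nonneg_comb_def)
qed

lemma nonneg_comb_extend:
  assumes J: "J \<subseteq> \<Delta>" and "nonneg_comb J \<beta>"
  shows "nonneg_comb \<Delta> \<beta>"
proof -
  obtain c where c: "\<beta> = (\<Sum>\<delta>\<in>J. real (c \<delta>) *\<^sub>R \<delta>)"
    using assms(2) by (auto simp: nonneg_comb_def)
  have "\<beta> = (\<Sum>\<delta>\<in>\<Delta>. real (if \<delta> \<in> J then c \<delta> else 0) *\<^sub>R \<delta>)"
    unfolding c by (rule sum.mono_neutral_cong_left[OF finite_simple J]) auto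
  then show ?thesis
    unfolding nonneg_comb_def by (rule exI[where x = "\<lambda>\<delta>. if \<delta> \<in> J then c \<delta> else 0"])
qed

lemma parabolic_based_root_system:
  assumes J: "J \<subseteq> \<Delta>"
  shows "based_root_system (\<Phi> \<inter> span J) J"
proof
  show "root_system (\<Phi> \<inter> span J)"
    unfolding root_system_def
  proof (intro conjI ballI allI impI)
    show "finite (\<Phi> \<inter> span J)" using finite_roots by simp
    show "0 \<notin> \<Phi> \<inter> span J" using zero_not_root by simp
  next
    fix a b assume "a \<in> \<Phi> \<inter> span J" "b \<in> \<Phi> \<inter> span J"
    then show "refl a b \<in> \<Phi> \<inter> span J"
      using refl_root by (auto simp: refl_def intro!: span_diff span_scale)
  next
    fix a b assume "a \<in> \<Phi> \<inter> span J" "b \<in> \<Phi> \<inter> span J"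
    then show "2 * (b \<bullet> a) / (a \<bullet> a) \<in> \<int>"
      using root_system unfolding root_system_def by auto
  next
    fix a c assume "a \<in> \<Phi> \<inter> span J" "c *\<^sub>R a \<in> \<Phi> \<inter> span J"
    then show "c = 1 \<or> c = -1" using root_multiple by auto
  qed
  show "simple_system (\<Phi> \<inter> span J) J"
    unfolding simple_system_def
  proof (intro conjI ballI)
    show "J \<subseteq> \<Phi> \<inter> span J" using J simple_subset_roots by (auto intro: span_base)
    show "independent J" using independent_simple J dependent_mono by blast
  qed (use root_nonneg_comb nonneg_comb_restrict[OF J] span_neg in blast)
qed

lemma parabolic_pos_roots: "J \<subseteq> \<Delta> \<Longrightarrow> pos_roots (\<Phi> \<inter> span J) J = P \<inter> span J"
  using nonneg_comb_restrict nonneg_comb_extend by (auto simp: pos_roots_def)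

context
  fixes J assumes J: "J \<subseteq> \<Delta>"
begin

lemma parabolic_subset: "w \<in> weyl J \<Longrightarrow> w \<in> W"
  using weyl_mono[OF J] by blast

lemma parabolic_inv: "w \<in> weyl J \<Longrightarrow> inv w \<in> weyl J"
  using weyl_inv J zero_not_simple by blast

lemma root_outside_span_cf:
  assumes "\<beta> \<in> \<Phi>" "\<beta> \<notin> span J"
  shows "\<exists>\<delta>\<in>\<Delta> - J. cf \<beta> \<delta> \<noteq> 0"
proof (rule ccontr)
  assume "\<not> ?thesis"
  then have "(\<Sum>\<delta>\<in>\<Delta>. cf \<beta> \<delta> *\<^sub>R \<delta>) = (\<Sum>\<delta>\<in>J. cf \<beta> \<delta> *\<^sub>R \<delta>)"
    by (intro sum.mono_neutral_right[OF finite_simple J]) auto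
  moreover have "(\<Sum>\<delta>\<in>J. cf \<beta> \<delta> *\<^sub>R \<delta>) \<in> span J"
    by (intro span_sum span_scale span_base)
  ultimately show False
    using sum_cf[OF root_in_span[OF assms(1)]] assms(2) by simp
qed

text \<open>An element of \<open>W\<^sub>J\<close> changes a root only by an element of \<open>span J\<close>, so it cannot
  change the sign of a coefficient outside \<open>J\<close>.\<close>
lemma parabolic_pos_root_outside:
  assumes w: "w \<in> weyl J" and \<beta>: "\<beta> \<in> P" "\<beta> \<notin> span J"
  shows "w \<beta> \<in> P"
proof -
  have \<beta>\<Phi>: "\<beta> \<in> \<Phi>" using \<beta> pos_roots_subset by auto
  obtain \<delta> where \<delta>: "\<delta> \<in> \<Delta>" "\<delta> \<notin> J" "cf \<beta> \<delta> \<noteq> 0"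
    using root_outside_span_cf[OF \<beta>\<Phi> \<beta>(2)] by auto
  have d: "w \<beta> - \<beta> \<in> span J"
    using weyl_moves_within_span[OF w] .
  then have "cf (w \<beta>) \<delta> = cf \<beta> \<delta> + cf (w \<beta> - \<beta>) \<delta>"
    using cf_add[OF root_in_span[OF \<beta>\<Phi>] span_mono[OF J, THEN subsetD, OF d]] by simp
  also have "cf (w \<beta> - \<beta>) \<delta> = 0"
    using cf_in_sub_span(2)[OF J d \<delta>(2)] .
  finally have "cf (w \<beta>) \<delta> > 0"
    using cf_pos_root[OF \<beta>(1) \<delta>(1)] \<delta>(3) by simp
  then show ?thesis
    using pos_root_if_cf_pos[OF weyl_root[OF parabolic_subset[OF w] \<beta>\<Phi>] \<delta>(1)] by simp
qed

lemma parabolic_inv_set_span: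
  assumes w: "w \<in> weyl J"
  shows "I w \<subseteq> span J"
proof
  fix \<beta> assume "\<beta> \<in> I w"
  then have "\<beta> \<in> P" "- w \<beta> \<in> P" by (auto simp: inv_set_iff)
  then show "\<beta> \<in> span J"
    using parabolic_pos_root_outside[OF w] pos_root_neg_not_pos by blast
qed

lemma parabolic_inv_set: 
  assumes w: "w \<in> weyl J"
  shows "inv_set (\<Phi> \<inter> span J) J w = I w"
  using parabolic_inv_set_span[OF w] weyl_preserves_span[OF w] span_neg
  by (auto simp: inv_set_def parabolic_pos_roots[OF J])

text \<open>Here \<open>a\<close> is the element of minimal length in the coset \<open>w W\<^sub>J\<close>.\<close>
lemma parabolic_factorization:
  "w \<in> W \<Longrightarrow> \<exists>a c. a \<in> W \<and> I a \<inter> span J = {} \<and> c \<in> weyl J \<and> w = a \<circ> c"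
proof (induction "card (I w)" arbitrary: w rule: less_induct)
  case less
  show ?case
  proof (cases "I w \<inter> span J = {}")
    case True
    then show ?thesis using less.prems weyl_id by (intro exI[of _ w] exI[of _ id]) auto
  next
    case False
    then obtain \<delta> where \<delta>: "\<delta> \<in> J" "- w \<delta> \<in> P"
      using inv_set_meets_span_simple[OF less.prems J] by blast
    then have "\<delta> \<in> \<Delta>" "\<delta> \<noteq> 0" using J zero_not_simple by auto
    have "card (I (w \<circ> refl \<delta>)) < card (I w)"
      using card_inv_set_comp_refl(2)[OF less.prems \<open>\<delta> \<in> \<Delta>\<close> \<delta>(2)] by simp
    from less.hyps[OF this weyl_comp[OF less.prems weyl_refl[OF \<open>\<delta> \<in> \<Delta>\<close>]]]
    obtain a c where ac: "a \<in> W" "I a \<inter> span J = {}" "c \<in> weyl J" "w \<circ> refl \<delta> = a \<circ> c"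
      by blast
    have "w = (w \<circ> refl \<delta>) \<circ> refl \<delta>"
      by (rule ext) (simp add: refl_refl[OF \<open>\<delta> \<noteq> 0\<close>])
    also have "\<dots> = a \<circ> (c \<circ> refl \<delta>)"
      unfolding ac(4) by (simp add: comp_assoc)
    finally show ?thesis
      using ac weyl_comp[OF ac(3) weyl_refl[OF \<delta>(1)]] by blast
  qed
qed

lemma inv_set_parabolic_factorization:
  assumes a: "a \<in> W" "I a \<inter> span J = {}" and c: "c \<in> weyl J"
  shows "I (a \<circ> c) \<inter> span J = I c"
proof -
  have "- a (c \<beta>) \<in> P \<longleftrightarrow> - c \<beta> \<in> P" if "\<beta> \<in> P" "\<beta> \<in> span J" for \<beta>
  proof -
    have "c \<beta> \<in> span J" "- c \<beta> \<in> span J"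
      using weyl_preserves_span[OF c that(2)] span_neg by blast+
    then have "c \<beta> \<notin> I a" "- c \<beta> \<notin> I a" using a(2) by blast+
    then have "c \<beta> \<in> P \<Longrightarrow> - a (c \<beta>) \<notin> P" "- c \<beta> \<in> P \<Longrightarrow> a (c \<beta>) \<notin> P"
      using W_neg[OF a(1)] by (auto simp: inv_set_iff)
    then show ?thesis
      using weyl_pos_root_cases[OF parabolic_subset[OF c] that(1)]
        weyl_root[OF a(1) weyl_root[OF parabolic_subset[OF c]]] root_pos_or_neg
        pos_root_neg_not_pos pos_roots_subset that(1) by blast
  qed
  then show ?thesis
    using parabolic_inv_set_span[OF c] by (auto simp: inv_set_iff)
qed

lemma card_inv_set_parabolic_factorization:
  assumes a: "a \<in> W" "I a \<inter> span J = {}" and c: "c \<in> weyl J"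
  shows "card (I (a \<circ> c)) = card (I a) + card (I c)"
proof -
  have "I a \<inter> N c = {}"
    using a(2) parabolic_inv_set_span[OF parabolic_inv[OF c]] by blast
  then show ?thesis
    using len_comp_eq_add_iff[OF a(1) parabolic_subset[OF c]] len_eq_card_inv_set
      a(1) parabolic_subset[OF c] len_eq_card_inv_set[OF weyl_comp[OF a(1) parabolic_subset[OF c]]]
    by simp
qed

lemma inv_set_span_imp_parabolic:
  assumes w: "w \<in> W" and "I w \<subseteq> span J"
  shows "w \<in> weyl J"
proof -
  obtain a c where ac: "a \<in> W" "I a \<inter> span J = {}" "c \<in> weyl J" "w = a \<circ> c"
    using parabolic_factorization[OF w] by blast
  then have "I w = I c"
    using inv_set_parabolic_factorization[OF ac(1-3)] assms(2) by blast
  then have "I a = {}"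
    using card_inv_set_parabolic_factorization[OF ac(1-3)] ac(4) finite_inv_set by simp
  then show ?thesis
    using inv_set_empty_imp_id[OF ac(1)] ac by simp
qed

lemma parabolic_factorization_unique:
  assumes a1: "a1 \<in> W" "I a1 \<inter> span J = {}" and c1: "c1 \<in> weyl J"
    and a2: "a2 \<in> W" "I a2 \<inter> span J = {}" and c2: "c2 \<in> weyl J"
    and eq: "a1 \<circ> c1 = a2 \<circ> c2"
  shows "a1 = a2 \<and> c1 = c2"
proof -
  have c1W: "c1 \<in> W" and c2W: "c2 \<in> W" using c1 c2 parabolic_subset by auto
  define d where "d = c1 \<circ> inv c2"
  have d: "d \<in> weyl J" "inv d \<in> weyl J"
    unfolding d_def using weyl_comp[OF c1 parabolic_inv[OF c2]] parabolic_inv by blast+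
  have "a2 = a1 \<circ> d"
    using eq W_inv[OF c2W] unfolding d_def by (metis comp_assoc comp_id)
  moreover from this have "a1 = a2 \<circ> inv d"
    using W_inv[OF parabolic_subset[OF d(1)]] by (simp add: comp_assoc)
  ultimately have "card (I d) = 0"
    using card_inv_set_parabolic_factorization[OF a1 d(1)]
      card_inv_set_parabolic_factorization[OF a2 d(2)] by simp
  then have "d = id"
    using inv_set_empty_imp_id[OF parabolic_subset[OF d(1)]] finite_inv_set by simp
  then have "c1 = c2"
    unfolding d_def using W_inv[OF c2W] by (metis comp_assoc comp_id)
  then show ?thesis
    using eq W_inv[OF c1W] by (metis comp_assoc comp_id)
qed

end

end

context based_root_system
begin

lemma splits_parabolic_iff:
  assumes J: "J \<subseteq> \<Delta>" and u: "u \<in> weyl J"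
  shows "based_root_system.splits (\<Phi> \<inter> span J) J u \<longleftrightarrow>
    bij_betw (\<lambda>(x, y). x \<circ> y) (right_quot J u \<times> right_interval J u) (weyl J)"
proof -
  interpret S: based_root_system "\<Phi> \<inter> span J" J
    by (rule parabolic_based_root_system[OF J])
  have "S.right_quot J u = right_quot J u" "S.right_interval J u = right_interval J u"
    using parabolic_inv_set[OF J] parabolic_inv[OF J] u
    by (auto simp: S.right_quot_def right_quot_def S.right_interval_def right_interval_def)
  then show ?thesis
    by (simp add: S.splits_def)
qed

lemma right_interval_parabolic:
  assumes J: "J \<subseteq> \<Delta>" and u: "u \<in> weyl J"
  shows "right_interval \<Delta> u = right_interval J u"
proof -
  have "y \<in> weyl J" if "y \<in> W" "N y \<subseteq> N u" for y
    using inv_set_span_imp_parabolic[OF J W_inv_in[OF that(1)]] that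
      parabolic_inv_set_span[OF J parabolic_inv[OF J u]] parabolic_inv[OF J] W_inv_inv
    by (metis subset_trans)
  then show ?thesis
    using parabolic_subset[OF J] by (auto simp: right_interval_def)
qed

lemma right_quot_parabolic_factorization:
  assumes J: "J \<subseteq> \<Delta>" and u: "u \<in> weyl J"
    and a: "a \<in> W" "I a \<inter> span J = {}" and c: "c \<in> weyl J"
  shows "a \<circ> c \<in> right_quot \<Delta> u \<longleftrightarrow> c \<in> right_quot J u"
proof -
  have "I (a \<circ> c) \<inter> N u = I c \<inter> N u"
    using inv_set_parabolic_factorization[OF J a c] parabolic_inv_set_span[OF J parabolic_inv[OF J u]]
    by blast
  then show ?thesis
    using weyl_comp[OF a(1) parabolic_subset[OF J c]] c by (simp add: right_quot_def)
qed

lemma splits_parabolic_factor: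
  assumes J: "J \<subseteq> \<Delta>" and u: "u \<in> weyl J" and "based_root_system.splits (\<Phi> \<inter> span J) J u"
    and "c \<in> weyl J"
  obtains x y where "x \<in> right_quot J u" "y \<in> right_interval J u" "c = x \<circ> y"
  using assms splits_parabolic_iff[OF J u] by (auto simp: bij_betw_mult_iff)

lemma splits_parabolic_unique:
  assumes J: "J \<subseteq> \<Delta>" and u: "u \<in> weyl J" and "based_root_system.splits (\<Phi> \<inter> span J) J u"
    and "x1 \<in> right_quot J u" "y1 \<in> right_interval J u" "x2 \<in> right_quot J u" "y2 \<in> right_interval J u"
    and "x1 \<circ> y1 = x2 \<circ> y2"
  shows "x1 = x2 \<and> y1 = y2"
  using assms splits_parabolic_iff[OF J u] by (simp add: bij_betw_mult_iff)

lemma right_quot_factorization: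
  assumes J: "J \<subseteq> \<Delta>" and u: "u \<in> weyl J" and "x \<in> right_quot \<Delta> u"
  obtains a c where "a \<in> W" "I a \<inter> span J = {}" "c \<in> right_quot J u" "x = a \<circ> c"
proof -
  have "x \<in> W" using assms(3) by (simp add: right_quot_def)
  then obtain a c where "a \<in> W" "I a \<inter> span J = {}" "c \<in> weyl J" "x = a \<circ> c"
    using parabolic_factorization[OF J] by blast
  with that show ?thesis
    using right_quot_parabolic_factorization[OF J u] assms(3) by blast
qed

text \<open>Write \<open>w = a c\<close> with \<open>a\<close> minimal in \<open>w W\<^sub>J\<close> and split \<open>c\<close> inside \<open>W\<^sub>J\<close>.\<close>
lemma splits_lift:
  assumes J: "J \<subseteq> \<Delta>" and u: "u \<in> weyl J"
    and split: "based_root_system.splits (\<Phi> \<inter> span J) J u"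
  shows "splits u"
proof -
  have sub: "right_quot J u \<subseteq> weyl J" "right_interval J u \<subseteq> weyl J"
    by (auto simp: right_quot_def right_interval_def)
  show ?thesis
    unfolding splits_def bij_betw_mult_iff right_interval_parabolic[OF J u]
  proof (intro conjI ballI impI)
    fix x y assume "x \<in> right_quot \<Delta> u" "y \<in> right_interval J u"
    then have "x \<in> W" "y \<in> W"
      using sub parabolic_subset[OF J] by (auto simp: right_quot_def)
    then show "x \<circ> y \<in> W"
      by (rule weyl_comp)
  next
    fix w assume "w \<in> W"
    then obtain a c where ac: "a \<in> W" "I a \<inter> span J = {}" "c \<in> weyl J" "w = a \<circ> c"
      using parabolic_factorization[OF J] by blast
    obtain x y where xy: "x \<in> right_quot J u" "y \<in> right_interval J u" "c = x \<circ> y"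
      using splits_parabolic_factor[OF J u split ac(3)] .
    then have "a \<circ> x \<in> right_quot \<Delta> u"
      using right_quot_parabolic_factorization[OF J u ac(1,2)] sub by blast
    moreover have "w = (a \<circ> x) \<circ> y"
      using ac(4) xy(3) by (simp add: comp_assoc)
    ultimately show "\<exists>x\<in>right_quot \<Delta> u. \<exists>y\<in>right_interval J u. w = x \<circ> y"
      using xy(2) by blast
  next
    fix x1 y1 x2 y2
    assume x: "x1 \<in> right_quot \<Delta> u" "x2 \<in> right_quot \<Delta> u"
      and y: "y1 \<in> right_interval J u" "y2 \<in> right_interval J u" and eq: "x1 \<circ> y1 = x2 \<circ> y2"
    obtain a1 c1 where ac1: "a1 \<in> W" "I a1 \<inter> span J = {}" "c1 \<in> right_quot J u" "x1 = a1 \<circ> c1"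
      using right_quot_factorization[OF J u x(1)] .
    obtain a2 c2 where ac2: "a2 \<in> W" "I a2 \<inter> span J = {}" "c2 \<in> right_quot J u" "x2 = a2 \<circ> c2"
      using right_quot_factorization[OF J u x(2)] .
    have "a1 \<circ> (c1 \<circ> y1) = a2 \<circ> (c2 \<circ> y2)"
      using eq ac1(4) ac2(4) by (simp add: comp_assoc)
    moreover have "c1 \<circ> y1 \<in> weyl J" "c2 \<circ> y2 \<in> weyl J"
      using ac1(3) ac2(3) y sub weyl_comp by blast+
    ultimately have "a1 = a2" "c1 \<circ> y1 = c2 \<circ> y2"
      using parabolic_factorization_unique[OF J ac1(1,2) _ ac2(1,2)] by blast+
    then show "x1 = x2" "y1 = y2"
      using splits_parabolic_unique[OF J u split ac1(3) y(1) ac2(3) y(2)] ac1(4) ac2(4) by simp_all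
  qed
qed

section \<open>Orthogonal products\<close>

context
  fixes J1 J2
  assumes J1: "J1 \<subseteq> \<Delta>" and J2: "J2 \<subseteq> \<Delta>"
    and orth: "\<And>a b. a \<in> J1 \<Longrightarrow> b \<in> J2 \<Longrightarrow> a \<bullet> b = 0"
    and cover: "\<Phi> \<subseteq> span J1 \<union> span J2"
begin

lemma root_not_in_both_spans: "\<beta> \<in> \<Phi> \<Longrightarrow> \<beta> \<in> span J1 \<Longrightarrow> \<beta> \<in> span J2 \<Longrightarrow> False"
  using orthogonal_spans[OF orth, where x = \<beta> and y = \<beta>] zero_not_root by auto

lemma inv_set_parabolic1_disjoint: "c \<in> weyl J1 \<Longrightarrow> I c \<inter> span J2 = {}"
  using parabolic_inv_set_span[OF J1] root_not_in_both_spans inv_set_subset pos_roots_subset by blast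

lemma inv_set_parabolic2_disjoint: "c \<in> weyl J2 \<Longrightarrow> I c \<inter> span J1 = {}"
  using parabolic_inv_set_span[OF J2] root_not_in_both_spans inv_set_subset pos_roots_subset by blast

lemma inv_set_prod:
  assumes c1: "c1 \<in> weyl J1" and c2: "c2 \<in> weyl J2"
  shows "I (c1 \<circ> c2) = I c1 \<union> I c2"
proof -
  have "I (c1 \<circ> c2) \<inter> span J2 = I c2"
    using inv_set_parabolic_factorization[OF J2 parabolic_subset[OF J1 c1]
        inv_set_parabolic1_disjoint[OF c1] c2] .
  moreover have "I (c1 \<circ> c2) \<inter> span J1 = I c1"
    using inv_set_parabolic_factorization[OF J1 parabolic_subset[OF J2 c2]
        inv_set_parabolic2_disjoint[OF c2] c1] weyl_commute[OF c1 c2 orth] by simp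
  moreover have "I (c1 \<circ> c2) \<subseteq> span J1 \<union> span J2"
    using cover inv_set_subset pos_roots_subset by blast
  ultimately show ?thesis by blast
qed

lemma inv_set_inv_prod:
  assumes c1: "c1 \<in> weyl J1" and c2: "c2 \<in> weyl J2"
  shows "N (c1 \<circ> c2) = N c1 \<union> N c2"
proof -
  have "inv (c1 \<circ> c2) = inv c2 \<circ> inv c1"
    using W_inv_comp parabolic_subset J1 J2 c1 c2 by blast
  also have "\<dots> = inv c1 \<circ> inv c2"
    using weyl_commute[OF parabolic_inv[OF J1 c1] parabolic_inv[OF J2 c2] orth] by simp
  finally show ?thesis
    using inv_set_prod[OF parabolic_inv[OF J1 c1] parabolic_inv[OF J2 c2]] by simp
qed

lemma prod_factorization: "w \<in> W \<Longrightarrow> \<exists>c1 c2. c1 \<in> weyl J1 \<and> c2 \<in> weyl J2 \<and> w = c1 \<circ> c2"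
proof -
  assume "w \<in> W"
  then obtain a c where ac: "a \<in> W" "I a \<inter> span J2 = {}" "c \<in> weyl J2" "w = a \<circ> c"
    using parabolic_factorization[OF J2] by blast
  moreover have "I a \<subseteq> span J1"
    using ac(2) cover inv_set_subset pos_roots_subset by blast
  ultimately show ?thesis
    using inv_set_span_imp_parabolic[OF J1] by blast
qed

lemma prod_factorization_unique:
  "c1 \<in> weyl J1 \<Longrightarrow> c2 \<in> weyl J2 \<Longrightarrow> d1 \<in> weyl J1 \<Longrightarrow> d2 \<in> weyl J2 \<Longrightarrow>
    c1 \<circ> c2 = d1 \<circ> d2 \<Longrightarrow> c1 = d1 \<and> c2 = d2"
  using parabolic_factorization_unique[OF J2] parabolic_subset[OF J1] inv_set_parabolic1_disjoint
  by blast

lemma right_quot_prod_iff: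
  assumes u: "u1 \<in> weyl J1" "u2 \<in> weyl J2" and c: "c1 \<in> weyl J1" "c2 \<in> weyl J2"
  shows "c1 \<circ> c2 \<in> right_quot \<Delta> (u1 \<circ> u2) \<longleftrightarrow> c1 \<in> right_quot J1 u1 \<and> c2 \<in> right_quot J2 u2"
proof -
  have "I c1 \<inter> N u2 = {}" "I c2 \<inter> N u1 = {}"
    using inv_set_parabolic1_disjoint[OF c(1)] inv_set_parabolic2_disjoint[OF c(2)]
      parabolic_inv_set_span[OF J1 parabolic_inv[OF J1 u(1)]]
      parabolic_inv_set_span[OF J2 parabolic_inv[OF J2 u(2)]] by blast+
  then show ?thesis
    using inv_set_prod[OF c] inv_set_inv_prod[OF u] c
      weyl_comp[OF parabolic_subset[OF J1 c(1)] parabolic_subset[OF J2 c(2)]]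
    by (auto simp: right_quot_def)
qed

lemma right_interval_prod_iff:
  assumes u: "u1 \<in> weyl J1" "u2 \<in> weyl J2" and c: "c1 \<in> weyl J1" "c2 \<in> weyl J2"
  shows "c1 \<circ> c2 \<in> right_interval \<Delta> (u1 \<circ> u2) \<longleftrightarrow> c1 \<in> right_interval J1 u1 \<and> c2 \<in> right_interval J2 u2"
proof -
  have "N c1 \<inter> N u2 = {}" "N c2 \<inter> N u1 = {}"
    using inv_set_parabolic1_disjoint[OF parabolic_inv[OF J1 c(1)]]
      inv_set_parabolic2_disjoint[OF parabolic_inv[OF J2 c(2)]]
      parabolic_inv_set_span[OF J1 parabolic_inv[OF J1 u(1)]]
      parabolic_inv_set_span[OF J2 parabolic_inv[OF J2 u(2)]] by blast+
  then show ?thesis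
    using inv_set_inv_prod[OF c] inv_set_inv_prod[OF u] c
      weyl_comp[OF parabolic_subset[OF J1 c(1)] parabolic_subset[OF J2 c(2)]]
    by (auto simp: right_interval_def)
qed

lemma splits_prod_factor:
  assumes u1: "u1 \<in> weyl J1" and u2: "u2 \<in> weyl J2"
    and split1: "based_root_system.splits (\<Phi> \<inter> span J1) J1 u1"
    and split2: "based_root_system.splits (\<Phi> \<inter> span J2) J2 u2" and "w \<in> W"
  shows "\<exists>x\<in>right_quot \<Delta> (u1 \<circ> u2). \<exists>y\<in>right_interval \<Delta> (u1 \<circ> u2). w = x \<circ> y"
proof -
  obtain w1 w2 where w: "w1 \<in> weyl J1" "w2 \<in> weyl J2" "w = w1 \<circ> w2"
    using prod_factorization[OF \<open>w \<in> W\<close>] by blast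
  obtain x1 y1 where xy1: "x1 \<in> right_quot J1 u1" "y1 \<in> right_interval J1 u1" "w1 = x1 \<circ> y1"
    using splits_parabolic_factor[OF J1 u1 split1 w(1)] .
  obtain x2 y2 where xy2: "x2 \<in> right_quot J2 u2" "y2 \<in> right_interval J2 u2" "w2 = x2 \<circ> y2"
    using splits_parabolic_factor[OF J2 u2 split2 w(2)] .
  have J: "x1 \<in> weyl J1" "y1 \<in> weyl J1" "x2 \<in> weyl J2" "y2 \<in> weyl J2"
    using xy1 xy2 by (auto simp: right_quot_def right_interval_def)
  then have "x1 \<circ> x2 \<in> right_quot \<Delta> (u1 \<circ> u2)" "y1 \<circ> y2 \<in> right_interval \<Delta> (u1 \<circ> u2)"
    using right_quot_prod_iff[OF u1 u2] right_interval_prod_iff[OF u1 u2] xy1 xy2 by blast+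
  moreover have "w = (x1 \<circ> x2) \<circ> (y1 \<circ> y2)"
    using w(3) xy1(3) xy2(3) weyl_commute[OF J(2,3) orth] by (metis comp_assoc)
  ultimately show ?thesis by blast
qed

lemma splits_prod_unique:
  assumes u1: "u1 \<in> weyl J1" and u2: "u2 \<in> weyl J2"
    and split1: "based_root_system.splits (\<Phi> \<inter> span J1) J1 u1"
    and split2: "based_root_system.splits (\<Phi> \<inter> span J2) J2 u2"
    and x: "x \<in> right_quot \<Delta> (u1 \<circ> u2)" "x' \<in> right_quot \<Delta> (u1 \<circ> u2)"
    and y: "y \<in> right_interval \<Delta> (u1 \<circ> u2)" "y' \<in> right_interval \<Delta> (u1 \<circ> u2)"
    and eq: "x \<circ> y = x' \<circ> y'"
  shows "x = x' \<and> y = y'"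
proof -
  have "x \<in> W" "y \<in> W" "x' \<in> W" "y' \<in> W"
    using x y by (auto simp: right_quot_def right_interval_def)
  then obtain x1 x2 y1 y2 x1' x2' y1' y2' where
    f: "x1 \<in> weyl J1" "x2 \<in> weyl J2" "x = x1 \<circ> x2" "y1 \<in> weyl J1" "y2 \<in> weyl J2" "y = y1 \<circ> y2"
    "x1' \<in> weyl J1" "x2' \<in> weyl J2" "x' = x1' \<circ> x2'" "y1' \<in> weyl J1" "y2' \<in> weyl J2" "y' = y1' \<circ> y2'"
    using prod_factorization by meson
  have parts: "x1 \<in> right_quot J1 u1" "x2 \<in> right_quot J2 u2" "x1' \<in> right_quot J1 u1"
    "x2' \<in> right_quot J2 u2" "y1 \<in> right_interval J1 u1" "y2 \<in> right_interval J2 u2"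
    "y1' \<in> right_interval J1 u1" "y2' \<in> right_interval J2 u2"
    using x y right_quot_prod_iff[OF u1 u2] right_interval_prod_iff[OF u1 u2] f by auto
  have "(x1 \<circ> y1) \<circ> (x2 \<circ> y2) = (x1' \<circ> y1') \<circ> (x2' \<circ> y2')"
    using eq f weyl_commute[OF f(4,2) orth] weyl_commute[OF f(10,8) orth] by (metis comp_assoc)
  moreover have "x1 \<circ> y1 \<in> weyl J1" "x2 \<circ> y2 \<in> weyl J2" "x1' \<circ> y1' \<in> weyl J1" "x2' \<circ> y2' \<in> weyl J2"
    using f weyl_comp by blast+
  ultimately have "x1 \<circ> y1 = x1' \<circ> y1'" "x2 \<circ> y2 = x2' \<circ> y2'"
    using prod_factorization_unique by blast+
  then have "x1 = x1' \<and> y1 = y1'" "x2 = x2' \<and> y2 = y2'"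
    using splits_parabolic_unique[OF J1 u1 split1] splits_parabolic_unique[OF J2 u2 split2] parts
    by blast+
  then show ?thesis
    using f by simp
qed

lemma splits_prod:
  assumes u1: "u1 \<in> weyl J1" and u2: "u2 \<in> weyl J2"
    and "based_root_system.splits (\<Phi> \<inter> span J1) J1 u1"
    and "based_root_system.splits (\<Phi> \<inter> span J2) J2 u2"
  shows "splits (u1 \<circ> u2)"
  unfolding splits_def bij_betw_mult_iff
  using splits_prod_factor[OF assms] splits_prod_unique[OF assms] weyl_comp
  by (auto simp: right_quot_def right_interval_def)

end

end

text \<open>A nonempty subset of \<open>\<Phi>\<close> orthogonal to its complement, of minimal size, is irreducible.\<close>
lemma component_exists:
  fixes \<Phi> :: "'a::euclidean_space set"
  assumes fin: "finite \<Phi>" and zero: "0 \<notin> \<Phi>" and red: "reducible_rs \<Phi>"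
  shows "\<exists>C. component \<Phi> C"
proof -
  let ?S = "\<lambda>C. C \<subseteq> \<Phi> \<and> C \<noteq> {} \<and> (\<forall>a\<in>C. \<forall>b\<in>\<Phi> - C. a \<bullet> b = 0)"
  have "?S \<Phi>" using red by (auto simp: reducible_rs_def)
  then obtain C where C: "?S C" and min: "\<And>D. ?S D \<Longrightarrow> card C \<le> card D"
    using ex_has_least_nat[of ?S \<Phi> card] by blast
  have "irreducible_rs C"
    unfolding irreducible_rs_def
  proof (intro conjI)
    show "C \<noteq> {}" using C by blast
  next
    show "\<not> (\<exists>A B. A \<noteq> {} \<and> B \<noteq> {} \<and> A \<union> B = C \<and> (\<forall>a\<in>A. \<forall>b\<in>B. a \<bullet> b = 0))"
    proof
    assume "\<exists>A B. A \<noteq> {} \<and> B \<noteq> {} \<and> A \<union> B = C \<and> (\<forall>a\<in>A. \<forall>b\<in>B. a \<bullet> b = 0)"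
    then obtain A B where AB: "A \<noteq> {}" "B \<noteq> {}" "A \<union> B = C" "\<forall>a\<in>A. \<forall>b\<in>B. a \<bullet> b = 0"
      by blast
    have SA: "?S A"
    proof (intro conjI ballI)
      show "A \<subseteq> \<Phi>" "A \<noteq> {}" using AB C by auto
    next
      fix a b assume "a \<in> A" "b \<in> \<Phi> - A"
      then show "a \<bullet> b = 0" using AB C by (cases "b \<in> C") auto
    qed
    obtain b where "b \<in> B" using AB by blast
    have "b \<notin> A"
    proof
      assume "b \<in> A"
      then have "b \<bullet> b = 0" using AB \<open>b \<in> B\<close> by blast
      then show False using zero C AB \<open>b \<in> B\<close> by auto
    qed
    then have "A \<subset> C" using AB \<open>b \<in> B\<close> by blast
    then have "card A < card C" using C fin by (meson finite_subset psubset_card_mono)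
    then show False using min[OF SA] by simp
    qed
  qed
  then show ?thesis
    using C unfolding component_def by blast
qed

lemma component_of_complement:
  assumes C: "component \<Phi> C" and C': "component (\<Phi> - C) C'"
  shows "component \<Phi> C'"
  using assms unfolding component_def
  by (metis (no_types, lifting) Diff_iff inner_commute subset_iff)

lemma simple_subset_of_same_pos_roots:
  assumes "based_root_system \<Psi> D1" "based_root_system \<Psi> D2"
    and eq: "pos_roots \<Psi> D1 = pos_roots \<Psi> D2"
  shows "D1 \<subseteq> D2"
proof
  interpret A: based_root_system \<Psi> D1 by fact
  interpret B: based_root_system \<Psi> D2 by fact
  fix \<delta> assume \<delta>: "\<delta> \<in> D1"
  then have "\<delta> \<in> B.P" using A.simple_pos_root eq by simp
  then obtain c where c: "\<delta> = (\<Sum>\<gamma>\<in>D2. real (c \<gamma>) *\<^sub>R \<gamma>)"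
    by (auto simp: pos_roots_def nonneg_comb_def)
  have pos: "\<gamma> \<in> A.P" if "\<gamma> \<in> D2" for \<gamma>
    using B.simple_pos_root[OF that] eq by simp
  then have span: "\<gamma> \<in> span D1" if "\<gamma> \<in> D2" for \<gamma>
    using that A.pos_roots_subset A.root_in_span by blast
  obtain \<gamma>0 where \<gamma>0: "\<gamma>0 \<in> D2" "c \<gamma>0 \<noteq> 0"
  proof (rule ccontr)
    assume "\<not> thesis"
    then have "\<forall>\<gamma>\<in>D2. c \<gamma> = 0" using that by blast
    then have "\<delta> = 0" using c by simp
    then show False using \<delta> A.zero_not_simple by simp
  qed
  text \<open>The coefficients of \<open>\<delta>\<close> are nonnegative sums, so a summand \<open>\<gamma>\<^sub>0\<close> of \<open>\<delta>\<close>
    has no coefficient outside \<open>\<delta>\<close>.\<close>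
  have cf\<delta>: "A.cf \<delta> \<epsilon> = (\<Sum>\<gamma>\<in>D2. real (c \<gamma>) * A.cf \<gamma> \<epsilon>)" for \<epsilon>
    by (subst c) (rule A.cf_sum[OF B.finite_simple span])
  have "A.cf \<gamma>0 \<epsilon> = 0" if \<epsilon>: "\<epsilon> \<in> D1" "\<epsilon> \<noteq> \<delta>" for \<epsilon>
  proof -
    have "(\<Sum>\<gamma>\<in>D2. real (c \<gamma>) * A.cf \<gamma> \<epsilon>) = 0"
      using cf\<delta>[of \<epsilon>] A.cf_simple[OF \<delta>, of \<epsilon>] \<epsilon>(2) by simp
    moreover have "0 \<le> real (c \<gamma>) * A.cf \<gamma> \<epsilon>" if "\<gamma> \<in> D2" for \<gamma>
      using A.cf_pos_root[OF pos[OF that] \<epsilon>(1)] by simp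
    ultimately have "real (c \<gamma>0) * A.cf \<gamma>0 \<epsilon> = 0"
      using sum_nonneg_eq_0_iff[OF B.finite_simple, of "\<lambda>\<gamma>. real (c \<gamma>) * A.cf \<gamma> \<epsilon>"] \<gamma>0(1)
      by blast
    then show ?thesis using \<gamma>0(2) by simp
  qed
  then have "\<gamma>0 = \<delta>"
    using A.pos_root_eq_simple[OF pos[OF \<gamma>0(1)] \<delta>] by blast
  then show "\<delta> \<in> D2" using \<gamma>0 by simp
qed

lemma simple_system_unique:
  assumes "based_root_system \<Psi> D" "simple_system \<Psi> D'" "pos_roots \<Psi> D' = pos_roots \<Psi> D"
  shows "D' = D"
proof -
  have "based_root_system \<Psi> D'"
    using assms(1,2) by (simp add: based_root_system_def)
  then show ?thesis
    using simple_subset_of_same_pos_roots assms(1,3) by blast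
qed

context based_root_system
begin

context
  fixes C assumes C: "component \<Phi> C"
begin

lemma component_orthogonal: "a \<in> C \<Longrightarrow> b \<in> \<Phi> - C \<Longrightarrow> a \<bullet> b = 0"
  using C by (auto simp: component_def)

lemma component_subset: "C \<subseteq> \<Phi>"
  using C by (auto simp: component_def)

lemma component_in_span: "C \<subseteq> span (\<Delta> \<inter> C)" "\<Phi> - C \<subseteq> span (\<Delta> - C)"
proof -
  have "span (\<Delta> \<inter> C) \<subseteq> span C" "span (\<Delta> - C) \<subseteq> span (\<Phi> - C)"
    by (rule span_mono, blast, rule span_mono, use simple_subset_roots in blast)
  then have orth: "x \<bullet> y = 0" if "x \<in> span C" "y \<in> span (\<Phi> - C)" for x y
    using that orthogonal_spans[OF component_orthogonal] by blast
  define v1 where "v1 \<beta> = (\<Sum>\<delta>\<in>\<Delta> \<inter> C. cf \<beta> \<delta> *\<^sub>R \<delta>)" for \<beta>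
  define v2 where "v2 \<beta> = (\<Sum>\<delta>\<in>\<Delta> - C. cf \<beta> \<delta> *\<^sub>R \<delta>)" for \<beta>
  have v: "v1 \<beta> \<in> span (\<Delta> \<inter> C)" "v2 \<beta> \<in> span (\<Delta> - C)" for \<beta>
    unfolding v1_def v2_def by (intro span_sum span_scale span_base; assumption)+
  have sum: "\<beta> = v1 \<beta> + v2 \<beta>" if "\<beta> \<in> \<Phi>" for \<beta>
    unfolding v1_def v2_def using sum_cf[OF root_in_span[OF that]] sum.Int_Diff[OF finite_simple]
    by metis
  text \<open>The part of a root orthogonal to its own side must vanish.\<close>
  show "C \<subseteq> span (\<Delta> \<inter> C)"
  proof
    fix \<beta> assume \<beta>: "\<beta> \<in> C"
    then have "\<beta> = v1 \<beta> + v2 \<beta>" using sum component_subset by blast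
    then have "v2 \<beta> = \<beta> - v1 \<beta>" by (metis add_diff_cancel_left')
    moreover have "\<beta> - v1 \<beta> \<in> span C"
      using \<beta> v(1) span_mono[of "\<Delta> \<inter> C" C] by (auto intro: span_diff span_base)
    moreover have "v2 \<beta> \<in> span (\<Phi> - C)"
      using v(2) \<open>span (\<Delta> - C) \<subseteq> span (\<Phi> - C)\<close> by blast
    ultimately have "v2 \<beta> = 0" using orth by (metis inner_eq_zero_iff)
    then show "\<beta> \<in> span (\<Delta> \<inter> C)" using \<open>\<beta> = v1 \<beta> + v2 \<beta>\<close> v(1)[of \<beta>]
      by (metis add.right_neutral)
  qed
  show "\<Phi> - C \<subseteq> span (\<Delta> - C)"
  proof
    fix \<beta> assume \<beta>: "\<beta> \<in> \<Phi> - C"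
    then have "\<beta> = v1 \<beta> + v2 \<beta>" using sum by blast
    then have "v1 \<beta> = \<beta> - v2 \<beta>" by (metis add_diff_cancel_right')
    moreover have "\<beta> - v2 \<beta> \<in> span (\<Phi> - C)"
      using \<beta> v(2) \<open>span (\<Delta> - C) \<subseteq> span (\<Phi> - C)\<close> by (auto intro: span_diff span_base)
    moreover have "v1 \<beta> \<in> span C"
      using v(1) \<open>span (\<Delta> \<inter> C) \<subseteq> span C\<close> by blast
    ultimately have "v1 \<beta> = 0" using orth by (metis inner_eq_zero_iff)
    then show "\<beta> \<in> span (\<Delta> - C)" using \<open>\<beta> = v1 \<beta> + v2 \<beta>\<close> v(2)[of \<beta>]
      by (metis add.left_neutral)
  qed
qed

lemma component_simple_orthogonal: "a \<in> \<Delta> \<inter> C \<Longrightarrow> b \<in> \<Delta> - C \<Longrightarrow> a \<bullet> b = 0"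
  using component_orthogonal simple_subset_roots by blast

lemma component_cover: "\<Phi> \<subseteq> span (\<Delta> \<inter> C) \<union> span (\<Delta> - C)"
  using component_in_span by blast

lemma component_root_not_in_both_spans: "\<beta> \<in> \<Phi> \<Longrightarrow> \<beta> \<in> span (\<Delta> \<inter> C) \<Longrightarrow> \<beta> \<in> span (\<Delta> - C) \<Longrightarrow> False"
  using orthogonal_spans[where A = "\<Delta> \<inter> C" and B = "\<Delta> - C" and x = \<beta> and y = \<beta>]
    component_simple_orthogonal zero_not_root by auto

lemma component_roots: "\<Phi> \<inter> span (\<Delta> \<inter> C) = C" "\<Phi> \<inter> span (\<Delta> - C) = \<Phi> - C"
proof -
  have "\<beta> \<in> C" if "\<beta> \<in> \<Phi>" "\<beta> \<in> span (\<Delta> \<inter> C)" for \<beta>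
    using that component_in_span(2) component_root_not_in_both_spans by blast
  moreover have "\<beta> \<notin> C" if "\<beta> \<in> \<Phi>" "\<beta> \<in> span (\<Delta> - C)" for \<beta>
    using that component_in_span(1) component_root_not_in_both_spans by blast
  ultimately show "\<Phi> \<inter> span (\<Delta> \<inter> C) = C" "\<Phi> \<inter> span (\<Delta> - C) = \<Phi> - C"
    using component_in_span component_subset by blast+
qed

lemma component_spans: "span C = span (\<Delta> \<inter> C)" "span (\<Phi> - C) = span (\<Delta> - C)"
  unfolding span_eq using component_in_span component_subset simple_subset_roots
  by (auto intro: span_base)

end

lemma sep_restrict:
  assumes J: "J \<subseteq> \<Delta>" and spans: "span C = span J" and roots: "\<Phi> \<inter> span J = C"
    and "\<exists>\<Delta>'. simple_system (\<Phi> \<inter> span C) \<Delta>' \<and> pos_roots (\<Phi> \<inter> span C) \<Delta>' = P \<inter> span C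
           \<and> sep (\<Phi> \<inter> span C) \<Delta>' (X \<inter> span C)"
  shows "sep C J (X \<inter> span J)"
proof -
  obtain \<Delta>' where "simple_system C \<Delta>'" "pos_roots C \<Delta>' = P \<inter> span J" "sep C \<Delta>' (X \<inter> span J)"
    using assms(4) unfolding spans roots by blast
  moreover have "based_root_system C J" "pos_roots C J = P \<inter> span J"
    using parabolic_based_root_system[OF J] parabolic_pos_roots[OF J] roots by simp_all
  ultimately show ?thesis
    using simple_system_unique by metis
qed

lemma sep_complement_component:
  assumes C: "component \<Phi> C" and ne: "\<Phi> - C \<noteq> {}"
    and hyp: "\<And>C'. component \<Phi> C' \<Longrightarrow> \<exists>\<Delta>'. simple_system (\<Phi> \<inter> span C') \<Delta>'
        \<and> pos_roots (\<Phi> \<inter> span C') \<Delta>' = P \<inter> span C' \<and> sep (\<Phi> \<inter> span C') \<Delta>' (X \<inter> span C')"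
  shows "sep (\<Phi> - C) (\<Delta> - C) (X \<inter> span (\<Delta> - C))"
proof (cases "irreducible_rs (\<Phi> - C)")
  case True
  have "a \<bullet> b = 0" if "a \<in> \<Phi> - C" "b \<in> \<Phi> - (\<Phi> - C)" for a b
    using component_orthogonal[OF C, of b a] component_subset[OF C] that by (simp add: inner_commute)
  with True have "component \<Phi> (\<Phi> - C)"
    unfolding component_def by blast
  then show ?thesis
    using sep_restrict[OF _ component_spans(2)[OF C] component_roots(2)[OF C]] hyp by blast
next
  case False
  then have red: "reducible_rs (\<Phi> - C)" using ne by (simp add: reducible_rs_def)
  have pos: "pos_roots (\<Phi> - C) (\<Delta> - C) = P \<inter> span (\<Delta> - C)"
    using parabolic_pos_roots[of "\<Delta> - C"] component_roots(2)[OF C] by auto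
  show ?thesis
  proof (rule sep.S2[OF red])
    fix C' assume C': "component (\<Phi> - C) C'"
    then have "C' \<subseteq> \<Phi> - C" by (simp add: component_def)
    then have sub: "span C' \<subseteq> span (\<Delta> - C)"
      using span_mono component_spans(2)[OF C] by blast
    have "(\<Phi> - C) \<inter> span C' = \<Phi> \<inter> span C'"
      using sub component_roots(2)[OF C] by blast
    moreover have "pos_roots (\<Phi> - C) (\<Delta> - C) \<inter> span C' = P \<inter> span C'"
      using sub pos by blast
    moreover have "X \<inter> span (\<Delta> - C) \<inter> span C' = X \<inter> span C'"
      using sub by blast
    ultimately show "\<exists>\<Delta>'. simple_system ((\<Phi> - C) \<inter> span C') \<Delta>'
        \<and> pos_roots ((\<Phi> - C) \<inter> span C') \<Delta>' = pos_roots (\<Phi> - C) (\<Delta> - C) \<inter> span C'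
        \<and> sep ((\<Phi> - C) \<inter> span C') \<Delta>' (X \<inter> span (\<Delta> - C) \<inter> span C')"
      using hyp[OF component_of_complement[OF C C']] by simp
  qed
qed

end

context based_root_system
begin

section \<open>The induction on separability\<close>

lemma root_le_simple_iff:
  assumes a: "\<alpha> \<in> \<Delta>"
  shows "{\<beta> \<in> P. root_le \<Delta> \<alpha> \<beta>} = P - span (\<Delta> - {\<alpha>})"
proof -
  have J: "\<Delta> - {\<alpha>} \<subseteq> \<Delta>" by auto
  have outside: "\<beta> \<notin> span (\<Delta> - {\<alpha>}) \<longleftrightarrow> cf \<beta> \<alpha> \<noteq> 0" if "\<beta> \<in> \<Phi>" for \<beta>
    using root_outside_span_cf[OF J that] cf_in_sub_span(2)[OF J] by auto
  have "root_le \<Delta> \<alpha> \<beta> \<longleftrightarrow> cf \<beta> \<alpha> \<noteq> 0" if \<beta>: "\<beta> \<in> P" for \<beta>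
  proof
    assume "root_le \<Delta> \<alpha> \<beta>"
    then have "cf (\<beta> - \<alpha>) \<alpha> \<ge> 0"
      using cf_nonneg_comb a by (simp add: root_le_def)
    then show "cf \<beta> \<alpha> \<noteq> 0"
      using cf_diff[OF root_in_span span_base[OF a]] cf_simple[OF a] \<beta> pos_roots_subset by force
  next
    assume ne: "cf \<beta> \<alpha> \<noteq> 0"
    obtain c where c: "\<beta> = (\<Sum>\<delta>\<in>\<Delta>. real (c \<delta>) *\<^sub>R \<delta>)"
      using \<beta> by (auto simp: pos_roots_def nonneg_comb_def)
    then have "c \<alpha> \<ge> 1"
      using representation_sum_eq[OF finite_simple independent_simple a] ne by fastforce
    have "(\<Sum>\<delta>\<in>\<Delta>. real ((c(\<alpha> := c \<alpha> - 1)) \<delta>) *\<^sub>R \<delta>)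
        = real (c \<alpha> - 1) *\<^sub>R \<alpha> + (\<Sum>\<delta>\<in>\<Delta> - {\<alpha>}. real (c \<delta>) *\<^sub>R \<delta>)"
      by (simp add: sum.remove[OF finite_simple a])
    also have "\<dots> = \<beta> - \<alpha>"
      unfolding c using \<open>c \<alpha> \<ge> 1\<close> by (simp add: sum.remove[OF finite_simple a] of_nat_diff algebra_simps)
    finally show "root_le \<Delta> \<alpha> \<beta>"
      unfolding root_le_def nonneg_comb_def by (metis (no_types))
  qed
  then show ?thesis
    using outside pos_roots_subset by blast
qed

lemma splits_empty_base:
  assumes "\<Delta> = {}" "u \<in> W"
  shows "splits u"
proof -
  have W: "W = {id}" using assms(1) weyl_empty by simp
  then have "right_quot \<Delta> u = {id}" "right_interval \<Delta> u = {id}"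
    using assms(2) by (auto simp: right_quot_def right_interval_def)
  with W show ?thesis by (simp add: splits_def bij_betw_def)
qed

text \<open>Either \<open>u\<close> or \<open>w\<^sub>0 u\<close> lies in \<open>W\<^sub>J\<close>; in the second case the hypothesis applies to
  \<open>w\<^sub>0\<^sub>J w\<^sub>0 u\<close>, whose inversion set in \<open>W\<^sub>J\<close> is \<open>I u \<inter> span J\<close>.\<close>
lemma splits_from_parabolic:
  assumes J: "J \<subseteq> \<Delta>" and u: "u \<in> W"
    and cond: "I u \<subseteq> span J \<or> P - span J \<subseteq> I u"
    and hyp: "\<And>v. v \<in> weyl J \<Longrightarrow> inv_set (\<Phi> \<inter> span J) J v = I u \<inter> span J \<Longrightarrow>
      based_root_system.splits (\<Phi> \<inter> span J) J v"
  shows "splits u"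
proof -
  interpret S: based_root_system "\<Phi> \<inter> span J" J
    by (rule parabolic_based_root_system[OF J])
  show ?thesis
  proof (cases "I u \<subseteq> span J")
    case True
    then have uJ: "u \<in> weyl J" using inv_set_span_imp_parabolic[OF J u] by blast
    moreover have "inv_set (\<Phi> \<inter> span J) J u = I u \<inter> span J"
      using parabolic_inv_set[OF J uJ] True by blast
    ultimately show ?thesis
      using splits_lift[OF J uJ hyp] by blast
  next
    case False
    let ?z = "w0 \<circ> u"
    have zW: "?z \<in> W" using weyl_comp[OF w0(1) u] .
    have Iz: "I ?z = P - I u" using inv_set_w0_comp[OF u] .
    then have zJ: "?z \<in> weyl J"
      using False cond inv_set_span_imp_parabolic[OF J zW] by blast
    let ?v = "S.w0 \<circ> ?z"
    have vJ: "?v \<in> weyl J" using weyl_comp[OF S.w0(1) zJ] .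
    have "S.I ?v = S.P - S.I ?z" using S.inv_set_w0_comp[OF zJ] .
    also have "S.P = P \<inter> span J" using parabolic_pos_roots[OF J] .
    also have "S.I ?z = P - I u" using parabolic_inv_set[OF J zJ] Iz by simp
    finally have "S.I ?v = I u \<inter> span J" using inv_set_subset by blast
    then have "S.splits ?v" using hyp[OF vJ] by simp
    then have "S.splits (S.w0 \<circ> ?v)" using S.splits_w0_comp[OF vJ] by blast
    moreover have "S.w0 \<circ> ?v = ?z" using S.w0_comp_w0 by (simp add: comp_assoc[symmetric])
    ultimately have "splits ?z" using splits_lift[OF J zJ] by simp
    then have "splits (w0 \<circ> ?z)" using splits_w0_comp[OF zW] by blast
    moreover have "w0 \<circ> ?z = u" using w0_comp_w0 by (simp add: comp_assoc[symmetric])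
    ultimately show ?thesis by simp
  qed
qed

lemma splits_rank_one:
  assumes \<Phi>: "\<Phi> = {\<alpha>, - \<alpha>}" and u: "u \<in> W"
  shows "splits u"
proof (rule splits_from_parabolic[of "{}"])
  have "P \<subseteq> I u" if "\<beta> \<in> I u" for \<beta>
  proof
    fix \<gamma> assume "\<gamma> \<in> P"
    moreover have "\<beta> \<in> P" using that inv_set_subset by blast
    ultimately have "\<gamma> = \<beta>"
      using \<Phi> pos_roots_subset pos_root_neg_not_pos by fastforce
    then show "\<gamma> \<in> I u" using that by simp
  qed
  then show "I u \<subseteq> span {} \<or> P - span {} \<subseteq> I u" by blast
next
  fix v :: "'a \<Rightarrow> 'a" assume "v \<in> weyl {}"
  then show "based_root_system.splits (\<Phi> \<inter> span {}) {} v"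
    using based_root_system.splits_empty_base[OF parabolic_based_root_system] by blast
qed (use u in auto)

lemma splits_reducible:
  assumes red: "reducible_rs \<Phi>" and u: "u \<in> W"
    and hyp: "\<And>C. component \<Phi> C \<Longrightarrow> \<exists>\<Delta>'. simple_system (\<Phi> \<inter> span C) \<Delta>'
        \<and> pos_roots (\<Phi> \<inter> span C) \<Delta>' = P \<inter> span C \<and> sep (\<Phi> \<inter> span C) \<Delta>' (I u \<inter> span C)"
    and IH: "\<And>(\<Phi>' :: 'a set) \<Delta>' u'. card \<Phi>' < card \<Phi> \<Longrightarrow> based_root_system \<Phi>' \<Delta>' \<Longrightarrow>
        u' \<in> weyl \<Delta>' \<Longrightarrow> sep \<Phi>' \<Delta>' (inv_set \<Phi>' \<Delta>' u') \<Longrightarrow> based_root_system.splits \<Phi>' \<Delta>' u'"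
  shows "splits u"
proof -
  obtain C where C: "component \<Phi> C"
    using component_exists finite_roots zero_not_root red by blast
  define J1 where "J1 = \<Delta> \<inter> C"
  define J2 where "J2 = \<Delta> - C"
  note roots = component_roots[OF C, folded J1_def J2_def]
  note prod = component_simple_orthogonal[OF C, folded J1_def J2_def]
    component_cover[OF C, folded J1_def J2_def]
  have J: "J1 \<subseteq> \<Delta>" "J2 \<subseteq> \<Delta>" by (auto simp: J1_def J2_def)
  have "irreducible_rs C" using C by (simp add: component_def)
  then have "C \<noteq> {}" "C \<noteq> \<Phi>"
    using red by (auto simp: irreducible_rs_def reducible_rs_def)
  then have "C \<subset> \<Phi>" "\<Phi> - C \<subset> \<Phi>" "\<Phi> - C \<noteq> {}" using component_subset[OF C] by blast+
  then have card: "card C < card \<Phi>" "card (\<Phi> - C) < card \<Phi>"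
    using psubset_card_mono[OF finite_roots] by blast+
  obtain u1 u2 where u12: "u1 \<in> weyl J1" "u2 \<in> weyl J2" "u = u1 \<circ> u2"
    using prod_factorization[OF J prod u] by blast
  then have "I u = I u1 \<union> I u2"
    using inv_set_prod[OF J prod] by simp
  then have "I u \<inter> span J1 = I u1" "I u \<inter> span J2 = I u2"
    using parabolic_inv_set_span J u12 inv_set_parabolic1_disjoint[OF J prod u12(1)]
      inv_set_parabolic2_disjoint[OF J prod u12(2)] by blast+
  moreover have "sep C J1 (I u \<inter> span J1)" "sep (\<Phi> - C) J2 (I u \<inter> span J2)"
    using sep_restrict[OF J(1) component_spans(1)[OF C, folded J1_def] roots(1)] hyp C
      sep_complement_component[OF C \<open>\<Phi> - C \<noteq> {}\<close> hyp, folded J2_def] by blast+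
  ultimately have "based_root_system.splits C J1 u1" "based_root_system.splits (\<Phi> - C) J2 u2"
    using IH card parabolic_based_root_system[OF J(1)] parabolic_based_root_system[OF J(2)]
      parabolic_inv_set[OF J(1) u12(1)] parabolic_inv_set[OF J(2) u12(2)] u12 roots by simp_all
  then show ?thesis
    using splits_prod[OF J prod u12(1,2)] roots u12(3) by simp
qed

end

lemma splits_if_sep:
  assumes "based_root_system \<Phi> \<Delta>" "u \<in> weyl \<Delta>" "sep \<Phi> \<Delta> (inv_set \<Phi> \<Delta> u)"
  shows "based_root_system.splits \<Phi> \<Delta> u"
  using assms
proof (induction "card \<Phi>" arbitrary: \<Phi> \<Delta> u rule: less_induct)
  case less
  interpret based_root_system \<Phi> \<Delta> by (rule less.prems(1))
  from less.prems(3) show ?case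
  proof (cases rule: sep.cases)
    case (S1 \<alpha>)
    then show ?thesis using splits_rank_one less.prems(2) by blast
  next
    case S2
    then show ?thesis using splits_reducible less.prems(2) less.hyps by blast
  next
    case (S3 \<alpha>)
    let ?J = "\<Delta> - {\<alpha>}"
    have J: "?J \<subseteq> \<Delta>" by auto
    have "\<alpha> \<notin> span ?J"
      using cf_in_sub_span(2)[OF J, of \<alpha> \<alpha>] cf_simple[OF S3(2)] by auto
    then have "card (\<Phi> \<inter> span ?J) < card \<Phi>"
      using finite_roots S3(2) simple_subset_roots by (intro psubset_card_mono) auto
    moreover have "I u \<subseteq> span ?J \<or> P - span ?J \<subseteq> I u"
      using S3(4) inv_set_subset unfolding root_le_simple_iff[OF S3(2)] by blast
    ultimately show ?thesis
      using splits_from_parabolic[OF J less.prems(2)] less.hyps parabolic_based_root_system[OF J]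
        S3(3) by simp
  qed
qed

theorem theorem4p3:
  fixes \<Phi> \<Delta> :: "'a::euclidean_space set" and u :: "'a \<Rightarrow> 'a"
  assumes "root_system \<Phi>" and "simple_system \<Phi> \<Delta>"
    and "u \<in> weyl \<Delta>" and "separable \<Phi> \<Delta> u"
  shows "splitting \<Delta> (gen_quot \<Delta> {v\<in>weyl \<Delta>. right_le \<Phi> \<Delta> v u})
                     {v\<in>weyl \<Delta>. right_le \<Phi> \<Delta> v u}"
proof -
  interpret based_root_system \<Phi> \<Delta>
    using assms(1,2) by unfold_locales
  have "splits u"
    using splits_if_sep[OF based_root_system_axioms assms(3)] assms(4) by (simp add: separable_def)
  then show ?thesis
    using splitting_if_splits[OF assms(3)] by blast
qed

end
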